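(* Let $P(x)=\sum_{j=0}^{n} x^{j}a_{j}$ be a (left) slice monogenic polynomial of degree $n$ with Clifford algebra coefficients $a_j\in\mathbb R_{0,m}$, defined for paravectors $x\in\mathbb R^{m+1}$, and let $P'(x)=\sum_{j=1}^n x^{j-1}ja_j$. Then $$\|P'\|\leq n\|P\|,$$ where $\|F\|=\max_{|x|\leq 1}|F(x)|$ (maximum over paravectors $x\in\mathbb R^{m+1}$ with $|x|\le 1$). Moreover, equality holds if and only if $P(x)=x^{n}a_{n}$ for some $a_{n}\in\mathbb R_{0,m}$.
   Context: $\mathbb R_{0,m}$ is the real Clifford algebra generated by $e_1,\dots,e_m$ with $e_ie_j+e_je_i=-2\delta_{ij}$; the modulus $|a|$ of an element $a\in\mathbb R_{0,m}$ is the Euclidean norm of its coordinate vector in the standard basis $\{e_A\}$. Paravectors are elements $x=x_0+\sum_{k=1}^m x_ke_k$, identified with $\mathbb R^{m+1}$. A (left) slice monogenic polynomial of degree $n$ is a function of the form $x\mapsto\sum_{j=0}^n x^ja_j$ on paravectors with coefficients $a_j\in\mathbb R_{0,m}$ on the right and $a_n\ne 0$. *)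

theory Defs
  imports "HOL-Analysis.Analysis"
begin

text \<open>The real Clifford algebra R_{0,m}. An element is represented by its coordinate
  function on the standard basis e_A, A a subset of {1..m}; coordinates outside
  Pow {1..m} are required to be 0.\<close>

type_synonym clif = "nat set \<Rightarrow> real"

definition clifford :: "nat \<Rightarrow> clif \<Rightarrow> bool" where
  "clifford m a \<longleftrightarrow> (\<forall>A. \<not> A \<subseteq> {1..m} \<longrightarrow> a A = 0)"

text \<open>Sign of e_A e_B = sign A B * e_{A symmetric-difference B}, with e_i e_i = -1.\<close>
definition blade_sign :: "nat set \<Rightarrow> nat set \<Rightarrow> real" where
  "blade_sign A B = (-1) ^ (card {(a, b). a \<in> A \<and> b \<in> B \<and> b < a} + card (A \<inter> B))"

definition cmul :: "nat \<Rightarrow> clif \<Rightarrow> clif \<Rightarrow> clif" where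
  "cmul m a b = (\<lambda>C. \<Sum>A\<in>Pow {1..m}. \<Sum>B\<in>Pow {1..m}.
      if (A - B) \<union> (B - A) = C then blade_sign A B * a A * b B else 0)"

definition cone :: clif where
  "cone = (\<lambda>A. if A = {} then 1 else 0)"

primrec cpow :: "nat \<Rightarrow> clif \<Rightarrow> nat \<Rightarrow> clif" where
  "cpow m x 0 = cone"
| "cpow m x (Suc k) = cmul m (cpow m x k) x"

definition cscale :: "real \<Rightarrow> clif \<Rightarrow> clif" where
  "cscale r a = (\<lambda>A. r * a A)"

definition cnorm :: "nat \<Rightarrow> clif \<Rightarrow> real" where
  "cnorm m a = sqrt (\<Sum>A\<in>Pow {1..m}. (a A)\<^sup>2)"

definition paravector :: "nat \<Rightarrow> clif \<Rightarrow> bool" where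
  "paravector m x \<longleftrightarrow> clifford m x \<and> (\<forall>A. 1 < card A \<longrightarrow> x A = 0)"

definition slice_poly :: "nat \<Rightarrow> (nat \<Rightarrow> clif) \<Rightarrow> nat \<Rightarrow> clif \<Rightarrow> clif" where
  "slice_poly m a n x = (\<lambda>C. \<Sum>j\<le>n. cmul m (cpow m x j) (a j) C)"

definition slice_poly_deriv :: "nat \<Rightarrow> (nat \<Rightarrow> clif) \<Rightarrow> nat \<Rightarrow> clif \<Rightarrow> clif" where
  "slice_poly_deriv m a n x =
     (\<lambda>C. \<Sum>j\<in>{1..n}. cmul m (cpow m x (j - 1)) (cscale (real j) (a j)) C)"

definition sup_norm :: "nat \<Rightarrow> (clif \<Rightarrow> clif) \<Rightarrow> real" where
  "sup_norm m F = Sup ((\<lambda>x. cnorm m (F x)) ` {x. paravector m x \<and> cnorm m x \<le> 1})"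

end

(*
  For a unit vector w, left multiplication by w is an orthogonal complex structure on R_{0,m},
  and paravectors x = x_0 + y w form a copy of the complex plane on which
  P(x_0 + y w) = sum_j z^j a_j with z = x_0 + i y.  Pairing with a unit element u through the
  complex-linear functional <a, u> + i <a, w u> therefore turns P and P' on that slice into an
  ordinary complex polynomial p_u and its derivative, with |p_u| <= |P|, and every value |P'(x)|
  is attained this way for a suitable u.

  Bernstein's inequality for p_u follows from M. Riesz's interpolation formula
    z p'(z) = n/2 p(z) - 1/n sum_k w_k p(z zeta_k),
  where zeta_k = e^{i pi (2k+1)/n} are the roots of zeta^n = -1 and w_k = 1/(1 - Re zeta_k) > 0
  add up to n^2/2.  If equality holds, the values p(z zeta_k) must all equal -p(z), which pins
  p down to a monomial c z^n; then |P| <= |c| on the unit ball forces P(x) = x^n b on every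
  slice, and comparing coefficients gives a_j = 0 for j < n.
*)
theory Submission
  imports Defs "HOL-Complex_Analysis.Complex_Analysis"
begin

section \<open>Bernstein's inequality for complex polynomials\<close>

definition riesz_node :: "nat \<Rightarrow> nat \<Rightarrow> complex" where
  "riesz_node n k = cis (pi * (2 * real k + 1) / real n)"

definition riesz_weight :: "nat \<Rightarrow> nat \<Rightarrow> real" where
  "riesz_weight n k = 1 / (1 - Re (riesz_node n k))"

lemma norm_riesz_node [simp]: "norm (riesz_node n k) = 1"
  by (simp add: riesz_node_def)

lemma riesz_node_power:
  "riesz_node n k ^ s = cis (pi * real s / real n) * cis (2 * pi * real s / real n) ^ k"
proof -
  have "riesz_node n k ^ s = cis (real s * (pi * (2 * real k + 1) / real n))"
    unfolding riesz_node_def by (rule Complex.DeMoivre)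
  also have "\<dots> = cis (pi * real s / real n + real k * (2 * pi * real s / real n))"
    by (rule arg_cong[where f = cis]) (simp add: field_simps add_divide_distrib)
  finally show ?thesis
    by (simp only: Complex.DeMoivre cis_mult)
qed

lemma cis_2pi_fraction_eq_1_iff:
  assumes "n > 0"
  shows "cis (2 * pi * real s / real n) = 1 \<longleftrightarrow> n dvd s"
proof
  assume "cis (2 * pi * real s / real n) = 1"
  then have "cos (2 * pi * real s / real n) = 1"
    by (simp add: complex_eq_iff)
  then obtain j :: int where "2 * pi * real s / real n = real_of_int j * (2 * pi)"
    by (auto simp: cos_one_2pi_int)
  then have "real s = real_of_int j * real n"
    using assms by (simp add: field_simps)
  then have "int s = j * int n"
    by (metis of_int_eq_iff of_int_mult of_int_of_nat_eq)
  then show "n dvd s"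
    by (metis dvd_triv_right int_dvd_int_iff)
next
  assume "n dvd s"
  then obtain t where "s = n * t" by auto
  then have "2 * pi * real s / real n = 2 * pi * real t"
    using assms by simp
  then show "cis (2 * pi * real s / real n) = 1"
    by simp
qed

lemma riesz_node_power_n:
  assumes "n > 0"
  shows "riesz_node n k ^ n = -1"
  using cis_2pi_fraction_eq_1_iff[OF assms, of n] assms
  by (simp add: riesz_node_power)

lemma riesz_node_ne_1: "n > 0 \<Longrightarrow> riesz_node n k \<noteq> 1"
  using riesz_node_power_n[of n k] by auto

lemma riesz_node_inj:
  assumes "n > 0" "k < n" "l < n" "riesz_node n k = riesz_node n l"
  shows "k = l"
proof -
  define r where "r = cis (2 * pi / real n)"
  have r_power: "r ^ d = cis (2 * pi * real d / real n)" for d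
    by (simp add: r_def Complex.DeMoivre mult.commute)
  have "r ^ k = r ^ l"
    using assms(4) riesz_node_power[of n _ 1] by (simp add: r_def)
  have False if "i < j" "j < n" "r ^ i = r ^ j" for i j
  proof -
    have "r ^ j = r ^ i * r ^ (j - i)"
      using that(1) by (simp flip: power_add)
    then have "r ^ (j - i) = 1"
      using that(3) by (simp add: r_def)
    then have "n dvd (j - i)"
      unfolding r_power cis_2pi_fraction_eq_1_iff[OF assms(1)] .
    then show False
      using that(1,2) by (meson dvd_imp_le diff_le_self zero_less_diff order.strict_trans1 not_less)
  qed
  then show ?thesis
    using \<open>r ^ k = r ^ l\<close> assms(2,3) by (metis linorder_neqE_nat)
qed

lemma sum_riesz_node_power:
  assumes "n > 0"
  shows "(\<Sum>k<n. riesz_node n k ^ s) = (if n dvd s then of_nat n * (-1) ^ (s div n) else 0)"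
proof (cases "n dvd s")
  case True
  then obtain t where "s = n * t" by auto
  then show ?thesis
    using True assms by (simp add: power_mult riesz_node_power_n)
next
  case False
  define r where "r = cis (2 * pi * real s / real n)"
  have "r \<noteq> 1"
    using False cis_2pi_fraction_eq_1_iff[OF assms] by (simp add: r_def)
  moreover have "r ^ n = 1"
    using assms unfolding r_def Complex.DeMoivre by (simp add: cis_2pi_fraction_eq_1_iff)
  ultimately have "(\<Sum>k<n. r ^ k) = 0"
    by (simp add: geometric_sum)
  then show ?thesis
    using False by (simp add: riesz_node_power r_def flip: sum_distrib_left)
qed

lemma inverse_1_minus_Re_unit:
  assumes "norm z = 1" "z \<noteq> 1"
  shows "Re z < 1" "complex_of_real (1 / (1 - Re z)) = -2 * z / (1 - z)\<^sup>2"
proof -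
  have "Re z \<noteq> 1"
  proof
    assume "Re z = 1"
    moreover have "(Re z)\<^sup>2 + (Im z)\<^sup>2 = 1"
      using assms(1) by (simp add: cmod_def)
    ultimately show False
      using assms(2) by (simp add: complex_eq_iff)
  qed
  moreover have "Re z \<le> 1"
    using abs_Re_le_cmod[of z] assms(1) by simp
  ultimately show "Re z < 1" by simp
  have "(1 - z)\<^sup>2 = z * (z + cnj z - 2)"
    using assms(1) by (simp add: algebra_simps power2_eq_square complex_norm_square[symmetric])
  also have "z + cnj z = 2 * of_real (Re z)"
    by (simp add: complex_add_cnj)
  finally have "(1 - z)\<^sup>2 = z * (2 * of_real (Re z) - 2)" .
  moreover have "of_real (Re z) \<noteq> (1::complex)"
    using \<open>Re z \<noteq> 1\<close> by (metis of_real_eq_1_iff)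
  ultimately show "complex_of_real (1 / (1 - Re z)) = -2 * z / (1 - z)\<^sup>2"
    using assms by (auto simp: field_simps of_real_diff)
qed

lemma riesz_weight_pos: "n > 0 \<Longrightarrow> riesz_weight n k > 0"
  using inverse_1_minus_Re_unit(1)[OF norm_riesz_node riesz_node_ne_1]
  by (simp add: riesz_weight_def)

lemma riesz_kernel_identity:
  fixes x :: "'a :: comm_ring_1"
  assumes "x ^ n = -1"
  shows "(1 - x)\<^sup>2 * (\<Sum>t<n. (2 * of_nat t + 2 - of_nat n) * x ^ t) = 4"
proof -
  define A where "A = (\<Sum>t<n. (of_nat t + 1) * x ^ t)"
  define B where "B = (\<Sum>t<n. x ^ t)"
  have A: "(1 - x)\<^sup>2 * A = 1 - (of_nat n + 1) * x ^ n + of_nat n * x ^ (n + 1)"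
    unfolding A_def by (induction n) (auto simp: algebra_simps power2_eq_square)
  have B: "(1 - x) * B = 1 - x ^ n"
    unfolding B_def by (rule one_diff_power_eq[symmetric])
  have "(\<Sum>t<n. (2 * of_nat t + 2 - of_nat n) * x ^ t) = (\<Sum>t<n. 2 * ((of_nat t + 1) * x ^ t) - of_nat n * x ^ t)"
    by (rule sum.cong) (auto simp: algebra_simps)
  also have "\<dots> = 2 * A - of_nat n * B"
    by (simp add: sum_distrib_left sum_subtractf A_def B_def)
  finally have G: "(\<Sum>t<n. (2 * of_nat t + 2 - of_nat n) * x ^ t) = 2 * A - of_nat n * B" .
  have "(1 - x)\<^sup>2 * (\<Sum>t<n. (2 * of_nat t + 2 - of_nat n) * x ^ t)
      = 2 * ((1 - x)\<^sup>2 * A) - of_nat n * (1 - x) * ((1 - x) * B)"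
    unfolding G by (simp add: algebra_simps power2_eq_square)
  also have "\<dots> = 4"
    unfolding A B using assms by (simp add: algebra_simps)
  finally show ?thesis .
qed

lemma riesz_weight_eq:
  assumes "n > 0"
  shows "complex_of_real (riesz_weight n k)
    = - (riesz_node n k / 2) * (\<Sum>t<n. (2 * of_nat t + 2 - of_nat n) * riesz_node n k ^ t)"
proof -
  let ?z = "riesz_node n k" and ?G = "\<Sum>t<n. (2 * of_nat t + 2 - of_nat n) * riesz_node n k ^ t"
  have "(1 - ?z)\<^sup>2 \<noteq> 0"
    using riesz_node_ne_1[OF assms] by simp
  have "complex_of_real (riesz_weight n k) = -2 * ?z / (1 - ?z)\<^sup>2"
    unfolding riesz_weight_def
    by (rule inverse_1_minus_Re_unit(2)[OF norm_riesz_node riesz_node_ne_1[OF assms]])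
  also have "\<dots> = - (?z / 2) * ?G"
    using riesz_kernel_identity[OF riesz_node_power_n[OF assms, of k]] \<open>(1 - ?z)\<^sup>2 \<noteq> 0\<close>
    by (simp add: field_simps)
  finally show ?thesis .
qed

lemma dvd_shifted_index_iff:
  fixes n j t :: nat
  assumes "j \<le> n" "t < n"
  shows "n dvd (t + 1 + j) \<longleftrightarrow> t + 1 + j = (if j < n then n else 2 * n)"
proof
  assume "n dvd (t + 1 + j)"
  then obtain q where q: "t + 1 + j = n * q" by auto
  have "n * 0 < n * q" "n * q < n * 3" "j < n \<Longrightarrow> n * q < n * 2" "j = n \<Longrightarrow> n * 1 < n * q"
    using q assms by linarith+
  then have "j < n \<Longrightarrow> q = 1" "j = n \<Longrightarrow> q = 2"
    by auto
  then show "t + 1 + j = (if j < n then n else 2 * n)"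
    using q assms(1) by auto
qed auto

lemma sum_riesz_weight_node_power:
  assumes "n > 0" "j \<le> n"
  shows "(\<Sum>k<n. complex_of_real (riesz_weight n k) * riesz_node n k ^ j)
    = of_nat n * (of_nat n / 2 - of_nat j)"
proof -
  define c where "c t = (2 * of_nat t + 2 - of_nat n :: complex)" for t
  define N where "N = (if j < n then n else 2 * n)"
  have N: "j + 1 \<le> N" "N - 1 - j < n"
    using assms by (auto simp: N_def)
  have collapse: "c t * (\<Sum>k<n. riesz_node n k ^ (t + 1 + j))
      = (if t = N - 1 - j then c (N - 1 - j) * of_nat n * (-1) ^ (N div n) else 0)" if "t < n" for t
  proof -
    have "n dvd (t + 1 + j) \<longleftrightarrow> t = N - 1 - j"
      using dvd_shifted_index_iff[OF assms(2) that] N(1) by (auto simp: N_def)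
    moreover have "t = N - 1 - j \<Longrightarrow> t + 1 + j = N"
      using N(1) by simp
    ultimately show ?thesis
      unfolding sum_riesz_node_power[OF assms(1)] by auto
  qed
  have "(\<Sum>k<n. complex_of_real (riesz_weight n k) * riesz_node n k ^ j)
      = (\<Sum>k<n. - (1/2) * (\<Sum>t<n. c t * riesz_node n k ^ (t + 1 + j)))"
    by (intro sum.cong refl)
       (simp add: riesz_weight_eq[OF assms(1)] c_def sum_distrib_left sum_distrib_right power_add mult_ac)
  also have "\<dots> = - (1/2) * (\<Sum>t<n. c t * (\<Sum>k<n. riesz_node n k ^ (t + 1 + j)))"
    unfolding sum_distrib_left[symmetric] by (subst sum.swap) (simp only: sum_distrib_left)
  also have "\<dots> = - (1/2) * (\<Sum>t<n. if t = N - 1 - j then c (N - 1 - j) * of_nat n * (-1) ^ (N div n) else 0)"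
    by (intro arg_cong[where f = "\<lambda>x. - (1/2) * x"] sum.cong refl) (rule collapse, simp)
  also have "\<dots> = - (1/2) * (c (N - 1 - j) * of_nat n * (-1) ^ (N div n))"
    using N(2) by (simp only: sum.delta finite_lessThan lessThan_iff if_True)
  also have "\<dots> = of_nat n * (of_nat n / 2 - of_nat j)"
  proof (cases "j < n")
    case True
    then show ?thesis
      using assms by (simp add: N_def c_def of_nat_diff field_simps)
  next
    case False
    then have "j = n" using assms(2) by simp
    then show ?thesis
      using assms by (simp add: N_def c_def of_nat_diff field_simps)
  qed
  finally show ?thesis .
qed

lemma sum_riesz_weight:
  assumes "n > 0"
  shows "(\<Sum>k<n. riesz_weight n k) = real n * real n / 2"
proof -
  have "complex_of_real (\<Sum>k<n. riesz_weight n k) = complex_of_real (real n * real n / 2)"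
    using sum_riesz_weight_node_power[OF assms, of 0] by simp
  then show ?thesis
    by (simp only: of_real_eq_iff)
qed

lemma poly_eq_sum_coeff:
  fixes p :: "'a :: comm_semiring_1 poly"
  assumes "degree p \<le> n"
  shows "poly p x = (\<Sum>i\<le>n. coeff p i * x ^ i)"
  by (subst poly_as_sum_of_monoms'[OF assms, symmetric]) (simp add: poly_sum poly_monom)

lemma poly_pderiv_sum_monom:
  "poly (pderiv (\<Sum>j\<le>n. monom (c j) j)) x = (\<Sum>j\<in>{1..n}. of_nat j * c j * x ^ (j - 1))"
proof -
  have "poly (pderiv (\<Sum>j\<le>n. monom (c j) j)) x = (\<Sum>j\<le>n. of_nat j * c j * x ^ (j - 1))"
    using higher_pderiv_sum[of 1 "\<lambda>j. monom (c j) j" "{..n}"]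
    by (simp add: pderiv_monom poly_sum poly_monom)
  also have "\<dots> = (\<Sum>j\<in>{1..n}. of_nat j * c j * x ^ (j - 1))"
    by (rule sum.mono_neutral_right) (auto simp: not_le)
  finally show ?thesis .
qed

lemma mult_poly_pderiv_eq_sum:
  fixes p :: "'a :: {comm_semiring_1, semiring_no_zero_divisors} poly"
  assumes "degree p \<le> n"
  shows "x * poly (pderiv p) x = (\<Sum>i\<le>n. of_nat i * coeff p i * x ^ i)"
proof -
  have "x * poly (pderiv p) x = x * (\<Sum>i\<in>{1..n}. of_nat i * coeff p i * x ^ (i - 1))"
    by (subst poly_as_sum_of_monoms'[OF assms, symmetric]) (simp only: poly_pderiv_sum_monom)
  also have "\<dots> = (\<Sum>i\<in>{1..n}. of_nat i * coeff p i * x ^ i)"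
    unfolding sum_distrib_left
  proof (intro sum.cong refl)
    fix i assume "i \<in> {1..n}"
    then have "x * x ^ (i - 1) = x ^ i"
      by (cases i) auto
    then show "x * (of_nat i * coeff p i * x ^ (i - 1)) = of_nat i * coeff p i * x ^ i"
      by (metis mult.left_commute)
  qed
  also have "\<dots> = (\<Sum>i\<le>n. of_nat i * coeff p i * x ^ i)"
    by (rule sum.mono_neutral_left) (auto simp: not_le)
  finally show ?thesis .
qed

lemma riesz_interpolation:
  fixes p :: "complex poly"
  assumes "degree p \<le> n" "n > 0"
  shows "z * poly (pderiv p) z = of_nat n / 2 * poly p z
    - (\<Sum>k<n. complex_of_real (riesz_weight n k) * poly p (z * riesz_node n k)) / of_nat n"
proof -
  have "(\<Sum>k<n. complex_of_real (riesz_weight n k) * poly p (z * riesz_node n k))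
      = (\<Sum>k<n. \<Sum>i\<le>n. coeff p i * z ^ i * (complex_of_real (riesz_weight n k) * riesz_node n k ^ i))"
    unfolding poly_eq_sum_coeff[OF assms(1)]
    by (intro sum.cong refl) (simp add: sum_distrib_left power_mult_distrib mult_ac)
  also have "\<dots> = (\<Sum>i\<le>n. coeff p i * z ^ i * (\<Sum>k<n. complex_of_real (riesz_weight n k) * riesz_node n k ^ i))"
    by (subst sum.swap) (simp only: sum_distrib_left)
  also have "\<dots> = (\<Sum>i\<le>n. coeff p i * z ^ i * (of_nat n * (of_nat n / 2 - of_nat i)))"
    using sum_riesz_weight_node_power[OF assms(2)] by simp
  finally have weighted: "(\<Sum>k<n. complex_of_real (riesz_weight n k) * poly p (z * riesz_node n k))
      = (\<Sum>i\<le>n. coeff p i * z ^ i * (of_nat n * (of_nat n / 2 - of_nat i)))" .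
  have "of_nat n / 2 * poly p z - (\<Sum>i\<le>n. coeff p i * z ^ i * (of_nat n * (of_nat n / 2 - of_nat i))) / of_nat n
      = (\<Sum>i\<le>n. of_nat i * coeff p i * z ^ i)"
    unfolding poly_eq_sum_coeff[OF assms(1)] sum_distrib_left sum_divide_distrib sum_subtractf[symmetric]
    by (intro sum.cong refl) (use assms(2) in \<open>simp add: field_simps\<close>)
  then show ?thesis
    unfolding weighted mult_poly_pderiv_eq_sum[OF assms(1)] by simp
qed

lemma bernstein_inequality_on_circle:
  fixes p :: "complex poly"
  assumes "degree p \<le> n" "n > 0" "\<And>w. norm w = 1 \<Longrightarrow> norm (poly p w) \<le> M" "norm z = 1"
  shows "norm (poly (pderiv p) z) \<le> real n * M"
proof -
  let ?S = "\<Sum>k<n. complex_of_real (riesz_weight n k) * poly p (z * riesz_node n k)"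
  have "norm ?S \<le> (\<Sum>k<n. riesz_weight n k * M)"
  proof (rule order.trans[OF norm_sum sum_mono])
    fix k
    have "norm (poly p (z * riesz_node n k)) \<le> M"
      using assms(3,4) by (simp add: norm_mult)
    then show "norm (complex_of_real (riesz_weight n k) * poly p (z * riesz_node n k)) \<le> riesz_weight n k * M"
      using riesz_weight_pos[OF assms(2), of k] by (simp add: norm_mult mult_left_mono)
  qed
  also have "\<dots> = real n * real n / 2 * M"
    by (simp add: sum_riesz_weight[OF assms(2)] flip: sum_distrib_right)
  finally have "norm ?S \<le> real n * real n / 2 * M" .
  have "norm (poly (pderiv p) z) = norm (z * poly (pderiv p) z)"
    using assms(4) by (simp add: norm_mult)
  also have "\<dots> \<le> norm (of_nat n / 2 * poly p z) + norm (?S / of_nat n)"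
    unfolding riesz_interpolation[OF assms(1,2)] by (rule norm_triangle_ineq4)
  also have "\<dots> \<le> real n / 2 * M + real n / 2 * M"
    using assms(2,3,4) \<open>norm ?S \<le> real n * real n / 2 * M\<close>
    by (intro add_mono) (simp_all add: norm_mult norm_divide field_simps)
  finally show ?thesis by (simp add: mult.commute)
qed

lemma holomorphic_on_poly: "poly p holomorphic_on A"
  using poly_holomorphic_on[of "\<lambda>z. z" A] by simp

theorem bernstein_inequality:
  fixes p :: "complex poly"
  assumes "degree p \<le> n" "\<And>w. norm w = 1 \<Longrightarrow> norm (poly p w) \<le> M" "norm z \<le> 1"
  shows "norm (poly (pderiv p) z) \<le> real n * M"
proof (cases "n = 0")
  case True
  then have "pderiv p = 0"
    using assms(1) by (simp add: pderiv_eq_0_iff)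
  then show ?thesis
    using True by simp
next
  case False
  show ?thesis
  proof (cases "norm z = 1")
    case True
    then show ?thesis
      using bernstein_inequality_on_circle[OF assms(1) _ assms(2)] False by simp
  next
    case False
    then have "z \<in> ball 0 1"
      using assms(3) by simp
    then show ?thesis
    proof (rule maximum_modulus_frontier[of "poly (pderiv p)" "ball 0 1", rotated -1])
      show "norm (poly (pderiv p) w) \<le> real n * M" if "w \<in> frontier (ball 0 1)" for w
        using that bernstein_inequality_on_circle[OF assms(1) _ assms(2)] \<open>n \<noteq> 0\<close> by (simp add: frontier_ball)
    qed (auto intro: holomorphic_on_poly holomorphic_on_imp_continuous_on)
  qed
qed

lemma eq_divide_if_Re_cnj_mult_eq:
  fixes v s :: complex
  assumes "L > 0" "norm v \<le> M" "norm s = L * M" "Re (cnj s * v) = norm s * M"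
  shows "v = s / of_real L"
proof -
  have "(norm (v - s / of_real L))\<^sup>2 = (Re v - Re s / L)\<^sup>2 + (Im v - Im s / L)\<^sup>2"
    by (simp add: cmod_def)
  also have "\<dots> = (norm v)\<^sup>2 - 2 * Re (cnj s * v) / L + (norm s / L)\<^sup>2"
    using assms(1) by (simp add: cmod_def power2_eq_square field_simps)
  also have "\<dots> \<le> M\<^sup>2 - 2 * (norm s * M) / L + (norm s / L)\<^sup>2"
    using assms(2,4) by (simp add: power_mono)
  also have "\<dots> = 0"
    using assms(1,3) by (simp add: field_simps power2_eq_square)
  finally show ?thesis
    by simp
qed

lemma norm_weighted_sum_eq_imp_eq:
  fixes v :: "'i \<Rightarrow> complex" and lam :: "'i \<Rightarrow> real"
  assumes "finite I" "\<And>i. i \<in> I \<Longrightarrow> lam i > 0" "\<And>i. i \<in> I \<Longrightarrow> norm (v i) \<le> M"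
    and "(\<Sum>i\<in>I. lam i) * M \<le> norm (\<Sum>i\<in>I. of_real (lam i) * v i)" "i \<in> I" "j \<in> I"
  shows "v i = v j"
proof -
  define s where "s = (\<Sum>i\<in>I. of_real (lam i) * v i)"
  define L where "L = (\<Sum>i\<in>I. lam i)"
  have "L > 0"
    unfolding L_def using assms(1,2,5) by (meson sum_pos2 order.refl less_imp_le)
  have "norm s \<le> (\<Sum>i\<in>I. lam i * M)"
    unfolding s_def
    by (rule order.trans[OF norm_sum sum_mono])
       (use assms(2,3) in \<open>simp add: norm_mult mult_left_mono less_imp_le\<close>)
  then have norm_s: "norm s = L * M"
    using assms(4) unfolding s_def L_def sum_distrib_right by simp
  have Re_le: "Re (cnj s * v i) \<le> norm s * M" if "i \<in> I" for i
  proof -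
    have "Re (cnj s * v i) \<le> norm (cnj s * v i)"
      by (rule complex_Re_le_cmod)
    also have "\<dots> \<le> norm s * M"
      using assms(3)[OF that] by (simp add: norm_mult mult_left_mono)
    finally show ?thesis .
  qed
  have "(\<Sum>i\<in>I. lam i * Re (cnj s * v i)) = Re (cnj s * s)"
    by (subst (2) s_def) (simp add: sum_distrib_left Re_sum mult.left_commute[of _ "of_real _"])
  also have "\<dots> = norm s * norm s"
    by (simp add: complex_mult_cnj cmod_def power2_eq_square)
  also have "\<dots> = (\<Sum>i\<in>I. lam i * (norm s * M))"
    using norm_s by (simp add: L_def flip: sum_distrib_right)
  finally have "(\<Sum>i\<in>I. lam i * (norm s * M) - lam i * Re (cnj s * v i)) = 0"
    by (simp add: sum_subtractf)
  then have Re_eq: "Re (cnj s * v i) = norm s * M" if "i \<in> I" for i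
    using sum_nonneg_eq_0_iff[OF assms(1)] Re_le assms(2) that
    by (smt (verit, best) mult_left_mono mult_cancel_left)
  have "v i = s / of_real L" if "i \<in> I" for i
    using \<open>L > 0\<close> assms(3)[OF that] norm_s Re_eq[OF that] by (rule eq_divide_if_Re_cnj_mult_eq)
  then show ?thesis
    using assms(5,6) by simp
qed

lemma poly_eq_0_on_riesz_nodes:
  fixes p :: "complex poly"
  assumes "degree p \<le> n" "n > 0" "z \<noteq> 0" "poly p z = 0"
    and "\<And>k. k < n \<Longrightarrow> poly p (z * riesz_node n k) = 0"
  shows "p = 0"
proof -
  define A where "A = insert z ((\<lambda>k. z * riesz_node n k) ` {..<n})"
  have "z \<notin> (\<lambda>k. z * riesz_node n k) ` {..<n}"
    using riesz_node_ne_1[OF assms(2)] assms(3) by auto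
  moreover have "inj_on (\<lambda>k. z * riesz_node n k) {..<n}"
    using riesz_node_inj[OF assms(2)] assms(3) by (auto simp: inj_on_def)
  ultimately have "card A = n + 1"
    unfolding A_def by (simp add: card_image)
  then show "p = 0"
    by (intro poly_eqI_degree[of A]) (use assms in \<open>auto simp: A_def\<close>)
qed

lemma bernstein_equality_on_circle:
  fixes p :: "complex poly"
  assumes "degree p \<le> n" "n > 0" "\<And>w. norm w = 1 \<Longrightarrow> norm (poly p w) \<le> M"
    and "norm z = 1" "real n * M \<le> norm (poly (pderiv p) z)"
  shows "p = monom (coeff p n) n"
proof -
  obtain m where n: "n = Suc m"
    using assms(2) by (cases n) auto
  define lam where "lam i = (if i = 0 then real n / 2 else riesz_weight n (i - 1) / real n)" for i
  define v where "v i = (if i = 0 then poly p z else - poly p (z * riesz_node n (i - 1)))" for i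
  have split_0: "(\<Sum>i\<le>n. f i) = f 0 + (\<Sum>k<n. f (Suc k))" for f :: "nat \<Rightarrow> 'a::comm_monoid_add"
    unfolding n sum.atMost_Suc_shift lessThan_Suc_atMost ..
  \<comment> \<open>The Riesz formula writes \<open>z p'(z)\<close> as a positive combination of values of \<open>p\<close> on the circle
    with total weight \<open>n\<close>; equality in the triangle inequality forces these values to coincide.\<close>
  have "(\<Sum>i\<le>n. of_real (lam i) * v i) = z * poly (pderiv p) z"
    using assms(2)
    by (simp add: split_0 lam_def v_def riesz_interpolation[OF assms(1,2)] sum_divide_distrib
        sum_negf)
  moreover have "(\<Sum>i\<le>n. lam i) = real n"
    using assms(2) by (simp add: split_0 lam_def sum_riesz_weight flip: sum_divide_distrib)
  moreover have "norm (v i) \<le> M" for i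
    using assms(3,4) by (simp add: v_def norm_mult)
  ultimately have "v i = v 0" if "i \<le> n" for i
    using assms(2,4,5) that riesz_weight_pos[OF assms(2)]
    by (intro norm_weighted_sum_eq_imp_eq[of "{..n}" lam v M]) (auto simp: lam_def norm_mult)
  then have node_values: "poly p (z * riesz_node n k) = - poly p z" if "k < n" for k
    using that by (metis Suc_leI v_def diff_Suc_1 minus_minus nat.distinct(1))
  define e where "e = poly p z / z ^ n"
  have "z \<noteq> 0"
    using assms(4) by auto
  have "p - monom e n = 0"
  proof (rule poly_eq_0_on_riesz_nodes[OF _ assms(2) \<open>z \<noteq> 0\<close>])
    show "degree (p - monom e n) \<le> n"
      using assms(1) by (simp add: degree_diff_le degree_monom_le)
    show "poly (p - monom e n) z = 0"
      using \<open>z \<noteq> 0\<close> by (simp add: e_def poly_monom)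
    show "poly (p - monom e n) (z * riesz_node n k) = 0" if "k < n" for k
      using \<open>z \<noteq> 0\<close> node_values[OF that] riesz_node_power_n[OF assms(2)]
      by (simp add: e_def poly_monom power_mult_distrib)
  qed
  then show ?thesis
    by (simp add: coeff_monom)
qed

theorem bernstein_equality:
  fixes p :: "complex poly"
  assumes "degree p \<le> n" "\<And>w. norm w = 1 \<Longrightarrow> norm (poly p w) \<le> M"
    and "norm \<xi> \<le> 1" "real n * M \<le> norm (poly (pderiv p) \<xi>)"
  shows "p = monom (coeff p n) n"
proof (cases "n = 0")
  case True
  then show ?thesis
    using poly_as_sum_of_monoms'[OF assms(1)] by simp
next
  case False
  obtain z where "norm z = 1" "real n * M \<le> norm (poly (pderiv p) z)"
  proof (cases "norm \<xi> = 1")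
    case False
    then have "\<xi> \<in> ball 0 1"
      using assms(3) by simp
    have "poly (pderiv p) constant_on UNIV"
    proof (rule maximum_modulus_principle[of _ UNIV "ball 0 1" \<xi>])
      show "norm (poly (pderiv p) w) \<le> norm (poly (pderiv p) \<xi>)" if "w \<in> ball 0 1" for w
        using bernstein_inequality[OF assms(1,2), of w] that assms(4) by simp
    qed (use \<open>\<xi> \<in> ball 0 1\<close> holomorphic_on_poly in auto)
    then have "poly (pderiv p) 1 = poly (pderiv p) \<xi>"
      unfolding constant_on_def by auto
    then show ?thesis
      using that[of 1] assms(4) by simp
  qed (use assms(4) in blast)
  then show ?thesis
    using bernstein_equality_on_circle[OF assms(1) _ assms(2)] False by blast
qed

section \<open>Vectors in the Clifford algebra\<close>

lemma sum_eq_single: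
  assumes "finite S" "\<And>x. x \<in> S \<Longrightarrow> x \<noteq> a \<Longrightarrow> f x = 0"
  shows "(\<Sum>x\<in>S. f x) = (if a \<in> S then f a else 0)"
proof -
  have "(\<Sum>x\<in>S. f x) = (\<Sum>x\<in>S. if x = a then f a else 0)"
    using assms(2) by (intro sum.cong) auto
  then show ?thesis
    using assms(1) by simp
qed

definition toggle :: "nat \<Rightarrow> nat set \<Rightarrow> nat set" where
  "toggle k D = (if k \<in> D then D - {k} else insert k D)"

lemma toggle_toggle [simp]: "toggle k (toggle k D) = D"
  by (auto simp: toggle_def)

lemma toggle_commute: "toggle k (toggle l D) = toggle l (toggle k D)"
  by (auto simp: toggle_def)

lemma symmetric_diff_singleton_eq_iff: "({k} - B) \<union> (B - {k}) = C \<longleftrightarrow> B = toggle k C"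
  by (auto simp: toggle_def)

lemma toggle_subset_iff: "k \<in> {1..m} \<Longrightarrow> toggle k D \<subseteq> {1..m} \<longleftrightarrow> D \<subseteq> {1..m}"
  by (auto simp: toggle_def)

lemma sum_Pow_toggle:
  assumes "k \<in> {1..m}"
  shows "(\<Sum>C\<in>Pow {1..m}. h C) = (\<Sum>D\<in>Pow {1..m}. h (toggle k D))"
  by (rule sum.reindex_bij_witness[of _ "toggle k" "toggle k"])
     (use toggle_subset_iff[OF assms] in auto)

lemma blade_sign_singleton:
  "blade_sign {k} B = (-1) ^ (card {b\<in>B. b < k} + (if k \<in> B then 1 else 0))"
proof -
  have "{(a, b). a \<in> {k} \<and> b \<in> B \<and> b < a} = (\<lambda>b. (k, b)) ` {b\<in>B. b < k}"
    by auto
  then have "card {(a, b). a \<in> {k} \<and> b \<in> B \<and> b < a} = card {b\<in>B. b < k}"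
    by (simp add: card_image inj_on_def)
  moreover have "card ({k} \<inter> B) = (if k \<in> B then 1 else 0)"
    by auto
  ultimately show ?thesis
    unfolding blade_sign_def by simp
qed

lemma blade_sign_singleton_square: "blade_sign {k} D * blade_sign {k} D = 1"
  by (simp add: blade_sign_singleton flip: power_add)

lemma blade_sign_singleton_toggle: "blade_sign {k} (toggle k D) = - blade_sign {k} D"
proof -
  have "{b \<in> toggle k D. b < k} = {b\<in>D. b < k}"
    by (auto simp: toggle_def)
  then show ?thesis
    unfolding blade_sign_singleton by (auto simp: toggle_def)
qed

lemma blade_sign_singleton_toggle_other:
  assumes "k \<noteq> l"
  shows "blade_sign {l} (toggle k D) = (if k < l then -1 else 1) * blade_sign {l} D"
proof -
  have same: "l \<in> toggle k D \<longleftrightarrow> l \<in> D"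
    using assms by (auto simp: toggle_def)
  show ?thesis
  proof (cases "k < l")
    case False
    then have "{b \<in> toggle k D. b < l} = {b\<in>D. b < l}"
      by (auto simp: toggle_def)
    then show ?thesis
      using False unfolding blade_sign_singleton same by simp
  next
    case True
    have fin: "finite {b\<in>D. b < l}"
      by simp
    show ?thesis
    proof (cases "k \<in> D")
      case True
      then have "{b \<in> toggle k D. b < l} = {b\<in>D. b < l} - {k}"
        by (auto simp: toggle_def)
      moreover have "card {b\<in>D. b < l} = Suc (card ({b\<in>D. b < l} - {k}))"
        using True \<open>k < l\<close> fin by (metis (no_types, lifting) card_Suc_Diff1 mem_Collect_eq)
      ultimately show ?thesis
        using \<open>k < l\<close> unfolding blade_sign_singleton same by simp
    next
      case False
      then have "{b \<in> toggle k D. b < l} = insert k {b\<in>D. b < l}"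
        using \<open>k < l\<close> by (auto simp: toggle_def)
      then show ?thesis
        using False \<open>k < l\<close> fin unfolding blade_sign_singleton same by simp
    qed
  qed
qed

definition cinner :: "nat \<Rightarrow> clif \<Rightarrow> clif \<Rightarrow> real" where
  "cinner m a b = (\<Sum>A\<in>Pow {1..m}. a A * b A)"

definition cvector :: "nat \<Rightarrow> clif \<Rightarrow> bool" where
  "cvector m w \<longleftrightarrow> clifford m w \<and> (\<forall>A. card A \<noteq> 1 \<longrightarrow> w A = 0)"

definition unit_cvector :: "nat \<Rightarrow> clif \<Rightarrow> bool" where
  "unit_cvector m w \<longleftrightarrow> cvector m w \<and> cinner m w w = 1"

lemma clifford_cone: "clifford m cone"
  by (simp add: clifford_def cone_def)

lemma clifford_lin: "clifford m a \<Longrightarrow> clifford m b \<Longrightarrow> clifford m (\<lambda>C. x * a C + y * b C)"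
  by (simp add: clifford_def)

lemma clifford_diff: "clifford m a \<Longrightarrow> clifford m b \<Longrightarrow> clifford m (\<lambda>C. a C - b C)"
  by (simp add: clifford_def)

lemma clifford_cscale: "clifford m a \<Longrightarrow> clifford m (cscale r a)"
  by (simp add: clifford_def cscale_def)

lemma clifford_sum: "(\<And>j. clifford m (f j)) \<Longrightarrow> clifford m (\<lambda>C. \<Sum>j\<in>S. f j C)"
  by (simp add: clifford_def)

lemma clifford_cmul: "clifford m (cmul m a b)"
  unfolding clifford_def cmul_def
proof (intro allI impI sum.neutral ballI)
  fix C A B
  assume "\<not> C \<subseteq> {1..m}" "A \<in> Pow {1..m}" "B \<in> Pow {1..m}"
  then have "(A - B) \<union> (B - A) \<noteq> C"
    by auto
  then show "(if (A - B) \<union> (B - A) = C then blade_sign A B * a A * b B else 0) = 0"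
    by simp
qed

lemma cvector_clifford: "cvector m w \<Longrightarrow> clifford m w"
  by (simp add: cvector_def)

lemma unit_cvector_cvector: "unit_cvector m w \<Longrightarrow> cvector m w"
  by (simp add: unit_cvector_def)

lemma cmul_lin_left:
  "cmul m (\<lambda>A. x * p A + y * q A) b = (\<lambda>C. x * cmul m p b C + y * cmul m q b C)"
  unfolding cmul_def
  by (rule ext) (simp add: sum_distrib_left sum.distrib[symmetric] algebra_simps if_distrib cong: if_cong)

lemma cmul_lin_right:
  "cmul m b (\<lambda>A. x * p A + y * q A) = (\<lambda>C. x * cmul m b p C + y * cmul m b q C)"
  unfolding cmul_def
  by (rule ext) (simp add: sum_distrib_left sum.distrib[symmetric] algebra_simps if_distrib cong: if_cong)

lemma cmul_zero_right: "cmul m a (\<lambda>_. 0) = (\<lambda>_. 0)"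
  using cmul_lin_right[of m a 0 a 0 a] by simp

lemma cmul_diff_right: "cmul m a (\<lambda>C. b C - c C) = (\<lambda>C. cmul m a b C - cmul m a c C)"
  using cmul_lin_right[of m a 1 b "-1" c] by simp

lemma cmul_cone_left:
  assumes "clifford m b"
  shows "cmul m cone b = b"
proof
  fix C
  have "cmul m cone b C = (if {} \<in> Pow {1..m} then (\<Sum>B\<in>Pow {1..m}.
      if ({} - B) \<union> (B - {}) = C then blade_sign {} B * cone {} * b B else 0) else 0)"
    unfolding cmul_def
  proof (rule sum_eq_single)
    fix A :: "nat set"
    assume "A \<noteq> {}"
    then have "cone A = 0"
      by (simp add: cone_def)
    then show "(\<Sum>B\<in>Pow {1..m}. if (A - B) \<union> (B - A) = C then blade_sign A B * cone A * b B else 0) = 0"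
      by (intro sum.neutral) simp
  qed simp
  also have "\<dots> = (\<Sum>B\<in>Pow {1..m}. if B = C then b B else 0)"
    by (simp add: cone_def blade_sign_def)
  also have "\<dots> = b C"
    using assms by (auto simp: clifford_def)
  finally show "cmul m cone b C = b C" .
qed

lemma cmul_cone_right:
  assumes "clifford m a"
  shows "cmul m a cone = a"
proof
  fix C
  have "cmul m a cone C = (\<Sum>A\<in>Pow {1..m}. if A = C then a A else 0)"
    unfolding cmul_def
  proof (intro sum.cong refl)
    fix A
    have "(\<Sum>B\<in>Pow {1..m}. if (A - B) \<union> (B - A) = C then blade_sign A B * a A * cone B else 0)
        = (if {} \<in> Pow {1..m} then (if (A - {}) \<union> ({} - A) = C then blade_sign A {} * a A * cone {} else 0) else 0)"
      by (rule sum_eq_single) (auto simp: cone_def)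
    also have "\<dots> = (if A = C then a A else 0)"
      by (simp add: cone_def blade_sign_def)
    finally show "(\<Sum>B\<in>Pow {1..m}. if (A - B) \<union> (B - A) = C then blade_sign A B * a A * cone B else 0)
        = (if A = C then a A else 0)" .
  qed
  also have "\<dots> = a C"
    using assms by (auto simp: clifford_def)
  finally show "cmul m a cone C = a C" .
qed

lemma sum_Pow_cvector:
  fixes m :: nat
  assumes "\<And>A. A \<in> Pow {1..m} \<Longrightarrow> card A \<noteq> 1 \<Longrightarrow> f A = 0"
  shows "(\<Sum>A\<in>Pow {1..m}. f A) = (\<Sum>k\<in>{1..m}. f {k})"
proof -
  have "(\<Sum>A\<in>Pow {1..m}. f A) = (\<Sum>A\<in>(\<lambda>k. {k}) ` {1..m}. f A)"
    by (rule sum.mono_neutral_right) (auto simp: card_1_singleton_iff intro!: assms)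
  also have "\<dots> = (\<Sum>k\<in>{1..m}. f {k})"
    by (simp add: sum.reindex)
  finally show ?thesis .
qed

lemma cmul_cvector_left:
  assumes "cvector m w" "clifford m a"
  shows "cmul m w a C = (\<Sum>k\<in>{1..m}. w {k} * blade_sign {k} (toggle k C) * a (toggle k C))"
proof -
  have "cmul m w a C = (\<Sum>k\<in>{1..m}. \<Sum>B\<in>Pow {1..m}.
      if ({k} - B) \<union> (B - {k}) = C then blade_sign {k} B * w {k} * a B else 0)"
    unfolding cmul_def
    by (rule sum_Pow_cvector) (use assms(1) in \<open>auto simp: cvector_def intro!: sum.neutral\<close>)
  also have "\<dots> = (\<Sum>k\<in>{1..m}. w {k} * blade_sign {k} (toggle k C) * a (toggle k C))"
    using assms(2)
    by (intro sum.cong refl, subst sum_eq_single[where a = "toggle k C" for k])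
       (auto simp: symmetric_diff_singleton_eq_iff clifford_def)
  finally show ?thesis .
qed

lemma cinner_cvector: "cvector m w \<Longrightarrow> cinner m w w = (\<Sum>k\<in>{1..m}. w {k} * w {k})"
  unfolding cinner_def by (rule sum_Pow_cvector) (auto simp: cvector_def)

lemma double_sum_antisymmetric:
  fixes f :: "'a \<Rightarrow> 'a \<Rightarrow> real"
  assumes "finite S" "\<And>k l. k \<in> S \<Longrightarrow> l \<in> S \<Longrightarrow> k \<noteq> l \<Longrightarrow> f l k = - f k l"
  shows "(\<Sum>k\<in>S. \<Sum>l\<in>S. f k l) = (\<Sum>k\<in>S. f k k)"
proof -
  have "2 * (\<Sum>k\<in>S. \<Sum>l\<in>S. f k l) = (\<Sum>k\<in>S. \<Sum>l\<in>S. f k l + f l k)"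
    using sum.swap[of f S S] by (simp add: sum.distrib)
  also have "\<dots> = (\<Sum>k\<in>S. 2 * f k k)"
  proof (intro sum.cong refl)
    fix k
    assume "k \<in> S"
    have "f k l + f l k = 0" if "l \<in> S" "l \<noteq> k" for l
      using assms(2)[OF \<open>k \<in> S\<close> that(1)] that(2) by simp
    then have "(\<Sum>l\<in>S. f k l + f l k) = f k k + f k k"
      using assms(1) \<open>k \<in> S\<close> by (subst sum_eq_single[where a = k]) auto
    then show "(\<Sum>l\<in>S. f k l + f l k) = 2 * f k k"
      by simp
  qed
  also have "\<dots> = 2 * (\<Sum>k\<in>S. f k k)"
    by (rule sum_distrib_left[symmetric])
  finally show ?thesis
    by linarith
qed

lemma cinner_commute: "cinner m a b = cinner m b a"
  unfolding cinner_def by (simp add: mult.commute)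

lemma cinner_lin_left: "cinner m (\<lambda>C. x * a C + y * b C) c = x * cinner m a c + y * cinner m b c"
  unfolding cinner_def by (simp add: sum.distrib sum_distrib_left algebra_simps)

lemma cinner_lin_right: "cinner m c (\<lambda>C. x * a C + y * b C) = x * cinner m c a + y * cinner m c b"
  unfolding cinner_def by (simp add: sum.distrib sum_distrib_left algebra_simps)

lemma cinner_scale_left: "cinner m (\<lambda>C. r * a C) c = r * cinner m a c"
  unfolding cinner_def by (simp add: sum_distrib_left mult_ac)

lemma cinner_scale_right: "cinner m c (\<lambda>C. r * a C) = r * cinner m c a"
  unfolding cinner_def by (simp add: sum_distrib_left mult_ac)

lemma cinner_sum_left: "cinner m (\<lambda>C. \<Sum>j\<in>S. f j C) c = (\<Sum>j\<in>S. cinner m (f j) c)"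
  unfolding cinner_def by (simp add: sum_distrib_right) (rule sum.swap)

lemma cinner_ge_zero: "cinner m a a \<ge> 0"
  unfolding cinner_def by (intro sum_nonneg) simp

lemma cinner_eq_zero_iff:
  assumes "clifford m a"
  shows "cinner m a a = 0 \<longleftrightarrow> a = (\<lambda>_. 0)"
proof
  assume "cinner m a a = 0"
  then have "\<forall>A\<in>Pow {1..m}. a A * a A = 0"
    unfolding cinner_def by (subst sum_nonneg_eq_0_iff[symmetric]) auto
  then show "a = (\<lambda>_. 0)"
    using assms by (auto simp: clifford_def)
qed (simp add: cinner_def)

lemma cnorm_cinner: "cnorm m a = sqrt (cinner m a a)"
  unfolding cnorm_def cinner_def by (simp add: power2_eq_square)

lemma cnorm_ge_zero: "0 \<le> cnorm m a"
  by (simp add: cnorm_def sum_nonneg)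

lemma cinner_cone: "cinner m cone cone = 1"
proof -
  have "cinner m cone cone = (if {} \<in> Pow {1..m} then cone {} * cone {} else 0)"
    unfolding cinner_def by (rule sum_eq_single) (auto simp: cone_def)
  then show ?thesis
    by (simp add: cone_def)
qed

lemma cinner_cmul_cvector_left:
  assumes "cvector m w" "clifford m a" "clifford m b"
  shows "cinner m (cmul m w a) b = - cinner m a (cmul m w b)"
proof -
  have "cinner m (cmul m w a) b
      = (\<Sum>k\<in>{1..m}. \<Sum>C\<in>Pow {1..m}. w {k} * blade_sign {k} (toggle k C) * a (toggle k C) * b C)"
    unfolding cinner_def cmul_cvector_left[OF assms(1,2)]
    by (simp add: sum_distrib_right) (rule sum.swap)
  also have "\<dots> = (\<Sum>k\<in>{1..m}. \<Sum>D\<in>Pow {1..m}. w {k} * blade_sign {k} D * a D * b (toggle k D))"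
  proof (rule sum.cong[OF refl])
    fix k :: nat
    assume "k \<in> {1..m}"
    show "(\<Sum>C\<in>Pow {1..m}. w {k} * blade_sign {k} (toggle k C) * a (toggle k C) * b C)
        = (\<Sum>D\<in>Pow {1..m}. w {k} * blade_sign {k} D * a D * b (toggle k D))"
      by (subst sum_Pow_toggle[OF \<open>k \<in> {1..m}\<close>]) simp
  qed
  also have "\<dots> = (\<Sum>k\<in>{1..m}. \<Sum>D\<in>Pow {1..m}. - (a D * (w {k} * blade_sign {k} (toggle k D) * b (toggle k D))))"
    by (intro sum.cong refl) (simp add: blade_sign_singleton_toggle)
  also have "\<dots> = - (\<Sum>k\<in>{1..m}. \<Sum>D\<in>Pow {1..m}. a D * (w {k} * blade_sign {k} (toggle k D) * b (toggle k D)))"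
    by (simp only: sum_negf)
  also have "(\<Sum>k\<in>{1..m}. \<Sum>D\<in>Pow {1..m}. a D * (w {k} * blade_sign {k} (toggle k D) * b (toggle k D)))
      = cinner m a (cmul m w b)"
    unfolding cinner_def cmul_cvector_left[OF assms(1,3)]
    by (simp only: sum_distrib_left) (rule sum.swap)
  finally show ?thesis .
qed

lemma cmul_cvector_twice:
  assumes "cvector m w" "clifford m b"
  shows "cmul m w (cmul m w b) = (\<lambda>C. - cinner m w w * b C)"
proof
  fix C
  show "cmul m w (cmul m w b) C = - cinner m w w * b C"
  proof (cases "C \<subseteq> {1..m}")
    case False
    then show ?thesis
      using clifford_cmul[of m w "cmul m w b"] assms(2) by (simp add: clifford_def)
  next
    case True
    define f where "f k l = w {k} * w {l} * (blade_sign {k} (toggle k C) * blade_sign {l} (toggle l (toggle k C)))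
      * b (toggle l (toggle k C))" for k l
    have "cmul m w (cmul m w b) C = (\<Sum>k\<in>{1..m}. \<Sum>l\<in>{1..m}. f k l)"
      unfolding cmul_cvector_left[OF assms(1) clifford_cmul] cmul_cvector_left[OF assms]
        sum_distrib_left f_def
      by (intro sum.cong refl) (simp only: mult_ac)
    \<comment> \<open>The terms with \<open>k \<noteq> l\<close> cancel in pairs because distinct generators anticommute.\<close>
    also have "\<dots> = (\<Sum>k\<in>{1..m}. f k k)"
    proof (rule double_sum_antisymmetric)
      fix k l :: nat
      assume "k \<noteq> l"
      then have "blade_sign {k} (toggle k C) * blade_sign {l} (toggle l (toggle k C))
          = blade_sign {k} C * blade_sign {l} C * (if k < l then -1 else 1)"
        "blade_sign {l} (toggle l C) * blade_sign {k} (toggle k (toggle l C))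
          = blade_sign {k} C * blade_sign {l} C * (if l < k then -1 else 1)"
        by (simp_all add: blade_sign_singleton_toggle blade_sign_singleton_toggle_other)
      then show "f l k = - f k l"
        using \<open>k \<noteq> l\<close> unfolding f_def toggle_commute[of l k]
        by (cases "k < l") (simp_all add: mult_ac)
    qed simp
    also have "\<dots> = (\<Sum>k\<in>{1..m}. - (w {k} * w {k}) * b C)"
    proof (intro sum.cong refl)
      fix k
      have "blade_sign {k} (toggle k C) * blade_sign {k} C = -1"
        using blade_sign_singleton_square[of k C] by (simp add: blade_sign_singleton_toggle)
      then show "f k k = - (w {k} * w {k}) * b C"
        by (simp add: f_def)
    qed
    also have "\<dots> = - cinner m w w * b C"
      by (simp add: cinner_cvector[OF assms(1)] sum_distrib_right sum_negf)
    finally show ?thesis .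
  qed
qed

lemma cmul_unit_cvector_twice:
  assumes "unit_cvector m w" "clifford m b"
  shows "cmul m w (cmul m w b) = (\<lambda>C. - b C)"
  using cmul_cvector_twice[OF unit_cvector_cvector assms(2)] assms(1) by (simp add: unit_cvector_def)

lemma cmul_unit_cvector_self:
  assumes "unit_cvector m w"
  shows "cmul m w w = (\<lambda>C. - cone C)"
  using cmul_unit_cvector_twice[OF assms clifford_cone] assms
  by (simp add: cmul_cone_right cvector_clifford unit_cvector_cvector)

lemma cinner_cmul_cvector_self:
  assumes "cvector m w" "clifford m a"
  shows "cinner m a (cmul m w a) = 0"
  using cinner_cmul_cvector_left[OF assms assms(2)] cinner_commute[of m a "cmul m w a"] by linarith

lemma cinner_cmul_unit_cvector:
  assumes "unit_cvector m w" "clifford m a" "clifford m b"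
  shows "cinner m (cmul m w a) (cmul m w b) = cinner m a b"
  using cinner_cmul_cvector_left[OF unit_cvector_cvector[OF assms(1)] assms(2) clifford_cmul]
    cmul_unit_cvector_twice[OF assms(1,3)]
  by (simp add: cinner_scale_right[of m a "-1", simplified])

section \<open>Complex slices\<close>

definition slice_point :: "clif \<Rightarrow> complex \<Rightarrow> clif" where
  "slice_point w z = (\<lambda>A. Re z * cone A + Im z * w A)"

definition slice_smult :: "nat \<Rightarrow> clif \<Rightarrow> complex \<Rightarrow> clif \<Rightarrow> clif" where
  "slice_smult m w z a = (\<lambda>C. Re z * a C + Im z * cmul m w a C)"

definition slice_coord :: "nat \<Rightarrow> clif \<Rightarrow> clif \<Rightarrow> clif \<Rightarrow> complex" where
  "slice_coord m w u a = Complex (cinner m a u) (cinner m a (cmul m w u))"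

lemma clifford_slice_smult: "clifford m a \<Longrightarrow> clifford m (slice_smult m w z a)"
  unfolding slice_smult_def by (rule clifford_lin[OF _ clifford_cmul])

lemma slice_point_eq_slice_smult: "cvector m w \<Longrightarrow> slice_point w z = slice_smult m w z cone"
  unfolding slice_point_def slice_smult_def by (simp add: cmul_cone_right cvector_clifford)

lemma clifford_slice_point: "cvector m w \<Longrightarrow> clifford m (slice_point w z)"
  unfolding slice_point_def by (intro clifford_lin clifford_cone cvector_clifford)

lemma paravector_slice_point: "cvector m w \<Longrightarrow> paravector m (slice_point w z)"
  unfolding paravector_def
proof (intro conjI allI impI)
  assume "cvector m w"
  then show "clifford m (slice_point w z)"
    by (rule clifford_slice_point)
  fix A :: "nat set"
  assume "1 < card A"
  then show "slice_point w z A = 0"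
    using \<open>cvector m w\<close> by (auto simp: slice_point_def cone_def cvector_def)
qed

lemma cmul_slice_point:
  assumes "cvector m w" "clifford m a"
  shows "cmul m (slice_point w z) a = slice_smult m w z a"
  unfolding slice_point_def slice_smult_def cmul_lin_left cmul_cone_left[OF assms(2)] ..

lemma cpow_slice_point:
  assumes "unit_cvector m w"
  shows "cpow m (slice_point w z) j = slice_point w (z ^ j)"
proof (induction j)
  case 0
  show ?case
    by (rule ext) (simp add: slice_point_def)
next
  case (Suc j)
  have w: "cvector m w"
    using assms by (rule unit_cvector_cvector)
  have "cpow m (slice_point w z) (Suc j) = slice_smult m w (z ^ j) (slice_point w z)"
    using Suc by (simp add: cmul_slice_point[OF w] clifford_slice_point[OF w])
  also have "\<dots> = slice_point w (z ^ Suc j)"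
    unfolding slice_smult_def slice_point_def cmul_lin_right cmul_unit_cvector_self[OF assms]
      cmul_cone_right[OF cvector_clifford[OF w]]
    by (rule ext) (simp add: algebra_simps)
  finally show ?case .
qed

lemma slice_smult_mult:
  assumes "unit_cvector m w" "clifford m a"
  shows "slice_smult m w z1 (slice_smult m w z2 a) = slice_smult m w (z1 * z2) a"
  unfolding slice_smult_def[of m w z1] unfolding slice_smult_def cmul_lin_right
    cmul_unit_cvector_twice[OF assms]
  by (rule ext) (simp add: algebra_simps)

lemma slice_smult_zero_right: "slice_smult m w z (\<lambda>_. 0) = (\<lambda>_. 0)"
  by (simp add: slice_smult_def cmul_zero_right)

lemma slice_smult_diff:
  "slice_smult m w z (\<lambda>C. a C - b C) = (\<lambda>C. slice_smult m w z a C - slice_smult m w z b C)"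
  by (simp add: slice_smult_def cmul_diff_right algebra_simps)

lemma cinner_slice_smult:
  assumes "unit_cvector m w" "clifford m a"
  shows "cinner m (slice_smult m w z a) (slice_smult m w z a) = (norm z)\<^sup>2 * cinner m a a"
proof -
  have w: "cvector m w"
    using assms(1) by (rule unit_cvector_cvector)
  have "cinner m (cmul m w a) a = 0"
    using cinner_cmul_cvector_self[OF w assms(2)] cinner_commute by metis
  then show ?thesis
    unfolding slice_smult_def cinner_lin_left cinner_lin_right cinner_cmul_unit_cvector[OF assms(1,2,2)]
      cinner_cmul_cvector_self[OF w assms(2)]
    by (simp add: cmod_def algebra_simps power2_eq_square)
qed

lemma cnorm_slice_smult:
  assumes "unit_cvector m w" "clifford m a"
  shows "cnorm m (slice_smult m w z a) = norm z * cnorm m a"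
  unfolding cnorm_cinner cinner_slice_smult[OF assms] by (simp add: real_sqrt_mult)

lemma cnorm_slice_point:
  assumes "unit_cvector m w"
  shows "cnorm m (slice_point w z) = norm z"
  using cnorm_slice_smult[OF assms clifford_cone, of z]
  by (simp add: slice_point_eq_slice_smult[OF unit_cvector_cvector[OF assms]] cnorm_cinner cinner_cone)

lemma slice_coord_slice_smult:
  assumes "unit_cvector m w" "clifford m a" "clifford m u"
  shows "slice_coord m w u (slice_smult m w z a) = z * slice_coord m w u a"
proof -
  have w: "cvector m w"
    using assms(1) by (rule unit_cvector_cvector)
  have "cinner m (slice_smult m w z a) u = Re z * cinner m a u - Im z * cinner m a (cmul m w u)"
    unfolding slice_smult_def cinner_lin_left cinner_cmul_cvector_left[OF w assms(2,3)] by simp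
  moreover have "cinner m (slice_smult m w z a) (cmul m w u) = Re z * cinner m a (cmul m w u) + Im z * cinner m a u"
    unfolding slice_smult_def cinner_lin_left cinner_cmul_unit_cvector[OF assms] by simp
  ultimately show ?thesis
    unfolding slice_coord_def by (simp add: complex_eq_iff algebra_simps)
qed

lemma slice_coord_sum: "slice_coord m w u (\<lambda>C. \<Sum>j\<in>S. f j C) = (\<Sum>j\<in>S. slice_coord m w u (f j))"
  unfolding slice_coord_def by (simp add: complex_eq_iff Re_sum Im_sum cinner_sum_left)

lemma slice_coord_cscale: "slice_coord m w u (cscale r a) = of_real r * slice_coord m w u a"
  unfolding slice_coord_def cscale_def cinner_scale_left by (simp add: complex_eq_iff)

text \<open>Bessel's identity for the orthonormal pair \<open>u, w u\<close>.\<close>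

lemma cinner_slice_coord_residual:
  assumes "unit_cvector m w" "clifford m a" "clifford m u" "cinner m u u = 1"
  defines "r \<equiv> \<lambda>C. a C - slice_smult m w (slice_coord m w u a) u C"
  shows "cinner m a a = (norm (slice_coord m w u a))\<^sup>2 + cinner m r r"
proof -
  define v where "v = cmul m w u"
  define p where "p = cinner m a u"
  define q where "q = cinner m a v"
  have r: "r = (\<lambda>C. a C - p * u C - q * v C)"
    by (simp add: r_def slice_smult_def slice_coord_def p_def q_def v_def algebra_simps)
  have "cinner m v v = 1"
    unfolding v_def cinner_cmul_unit_cvector[OF assms(1,3,3)] by (rule assms(4))
  moreover have "cinner m u v = 0"
    unfolding v_def by (rule cinner_cmul_cvector_self[OF unit_cvector_cvector[OF assms(1)] assms(3)])
  moreover have "cinner m r r = cinner m a a - 2 * p * cinner m a u - 2 * q * cinner m a v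
      + p * p * cinner m u u + 2 * p * q * cinner m u v + q * q * cinner m v v"
    unfolding r cinner_def by (simp add: sum.distrib sum_subtractf sum_distrib_left algebra_simps)
  ultimately have "cinner m r r = cinner m a a - p * p - q * q"
    using assms(4) by (simp add: p_def q_def)
  moreover have "(norm (slice_coord m w u a))\<^sup>2 = p * p + q * q"
    by (simp add: slice_coord_def p_def q_def v_def cmod_def power2_eq_square)
  ultimately show ?thesis
    by simp
qed

lemma norm_slice_coord_le:
  assumes "unit_cvector m w" "clifford m a" "clifford m u" "cinner m u u = 1"
  shows "norm (slice_coord m w u a) \<le> cnorm m a"
proof -
  have "(norm (slice_coord m w u a))\<^sup>2 \<le> cinner m a a"
    using cinner_slice_coord_residual[OF assms] cinner_ge_zero by (smt (verit))
  then show ?thesis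
    unfolding cnorm_cinner by (simp add: real_le_rsqrt)
qed

lemma slice_coord_eq_cnorm_imp:
  assumes "unit_cvector m w" "clifford m a" "clifford m u" "cinner m u u = 1"
    and "cnorm m a \<le> norm (slice_coord m w u a)"
  shows "a = slice_smult m w (slice_coord m w u a) u"
proof -
  define r where "r = (\<lambda>C. a C - slice_smult m w (slice_coord m w u a) u C)"
  have "sqrt (cinner m a a) \<le> sqrt ((norm (slice_coord m w u a))\<^sup>2)"
    using assms(5) unfolding cnorm_cinner by simp
  then have "cinner m a a \<le> (norm (slice_coord m w u a))\<^sup>2"
    by (simp only: real_sqrt_le_iff)
  then have "cinner m r r = 0"
    using cinner_slice_coord_residual[OF assms(1-4)] cinner_ge_zero[of m r] unfolding r_def by linarith
  then have "r = (\<lambda>_. 0)"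
    using cinner_eq_zero_iff[of m r] assms(2,3) unfolding r_def
    by (simp add: clifford_diff clifford_slice_smult)
  show ?thesis
  proof
    fix C
    have "r C = 0"
      using \<open>r = (\<lambda>_. 0)\<close> by simp
    then show "a C = slice_smult m w (slice_coord m w u a) u C"
      by (simp add: r_def)
  qed
qed

lemma exists_slice_coord_eq_cnorm:
  assumes "unit_cvector m w" "clifford m y"
  obtains u where "clifford m u" "cinner m u u = 1" "slice_coord m w u y = of_real (cnorm m y)"
proof (cases "y = (\<lambda>_. 0)")
  case True
  then show ?thesis
    using that[OF clifford_cone cinner_cone] by (simp add: slice_coord_def cinner_def cnorm_def complex_eq_iff)
next
  case False
  define c where "c = cnorm m y"
  have "c > 0"
    using False cinner_eq_zero_iff[OF assms(2)] cinner_ge_zero[of m y]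
    unfolding c_def cnorm_cinner by simp
  have cc: "c * c = cinner m y y"
    unfolding c_def cnorm_cinner using cinner_ge_zero by simp
  define u where "u = (\<lambda>C. (1 / c) * y C)"
  have wu: "cmul m w u = (\<lambda>C. (1 / c) * cmul m w y C)"
    using cmul_lin_right[of m w "1 / c" y 0 y] by (simp add: u_def)
  have "clifford m u"
    using assms(2) by (simp add: u_def clifford_def)
  moreover have "cinner m u u = 1"
    using \<open>c > 0\<close> unfolding u_def cinner_scale_left cinner_scale_right cc[symmetric] by simp
  moreover have "cinner m y u = c"
    using \<open>c > 0\<close> unfolding u_def cinner_scale_right cc[symmetric] by simp
  moreover have "cinner m y (cmul m w u) = 0"
    unfolding wu cinner_scale_right
      cinner_cmul_cvector_self[OF unit_cvector_cvector[OF assms(1)] assms(2)] by simp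
  ultimately show ?thesis
    using that by (simp add: slice_coord_def c_def complex_eq_iff)
qed

lemma cnorm_eq_0_iff: "clifford m a \<Longrightarrow> cnorm m a = 0 \<longleftrightarrow> a = (\<lambda>_. 0)"
  using cinner_eq_zero_iff[of m a] cinner_ge_zero[of m a] by (simp add: cnorm_cinner)

definition slice_coeff_poly :: "nat \<Rightarrow> clif \<Rightarrow> clif \<Rightarrow> (nat \<Rightarrow> clif) \<Rightarrow> nat \<Rightarrow> complex poly" where
  "slice_coeff_poly m w u a n = (\<Sum>j\<le>n. monom (slice_coord m w u (a j)) j)"

lemma degree_slice_coeff_poly: "degree (slice_coeff_poly m w u a n) \<le> n"
  unfolding slice_coeff_poly_def
  by (rule degree_sum_le) (auto intro: order.trans[OF degree_monom_le])

lemma coeff_slice_coeff_poly: "j \<le> n \<Longrightarrow> coeff (slice_coeff_poly m w u a n) j = slice_coord m w u (a j)"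
  unfolding slice_coeff_poly_def coeff_sum by (simp add: coeff_monom)

lemma slice_poly_slice_point:
  assumes "unit_cvector m w" "\<And>j. clifford m (a j)"
  shows "slice_poly m a n (slice_point w z) = (\<lambda>C. \<Sum>j\<le>n. slice_smult m w (z ^ j) (a j) C)"
  unfolding slice_poly_def cpow_slice_point[OF assms(1)]
    cmul_slice_point[OF unit_cvector_cvector[OF assms(1)] assms(2)] ..

lemma slice_poly_deriv_slice_point:
  assumes "unit_cvector m w" "\<And>j. clifford m (a j)"
  shows "slice_poly_deriv m a n (slice_point w z)
    = (\<lambda>C. \<Sum>j\<in>{1..n}. slice_smult m w (z ^ (j - 1)) (cscale (real j) (a j)) C)"
  unfolding slice_poly_deriv_def cpow_slice_point[OF assms(1)]
    cmul_slice_point[OF unit_cvector_cvector[OF assms(1)] clifford_cscale[OF assms(2)]] ..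

lemma slice_coord_slice_poly:
  assumes "unit_cvector m w" "\<And>j. clifford m (a j)" "clifford m u"
  shows "slice_coord m w u (slice_poly m a n (slice_point w z)) = poly (slice_coeff_poly m w u a n) z"
  unfolding slice_poly_slice_point[OF assms(1,2)] slice_coord_sum
    slice_coord_slice_smult[OF assms(1,2,3)] slice_coeff_poly_def
  by (simp add: poly_sum poly_monom mult.commute)

lemma slice_coord_slice_poly_deriv:
  assumes "unit_cvector m w" "\<And>j. clifford m (a j)" "clifford m u"
  shows "slice_coord m w u (slice_poly_deriv m a n (slice_point w z))
    = poly (pderiv (slice_coeff_poly m w u a n)) z"
  unfolding slice_poly_deriv_slice_point[OF assms(1,2)] slice_coord_sum
    slice_coord_slice_smult[OF assms(1) clifford_cscale[OF assms(2)] assms(3)]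
    slice_coeff_poly_def poly_pderiv_sum_monom slice_coord_cscale
  by (simp add: mult_ac)

lemma slice_sum_eq_0_imp_coeffs_eq_0:
  assumes "unit_cvector m w" "\<And>j. clifford m (d j)"
    and "\<And>z. norm z = 1 \<Longrightarrow> (\<lambda>C. \<Sum>j\<le>n. slice_smult m w (z ^ j) (d j) C) = (\<lambda>_. 0)"
    and "j \<le> n"
  shows "d j = (\<lambda>_. 0)"
proof -
  let ?p = "slice_coeff_poly m w (d j) d n"
  have "poly ?p z = 0" if "norm z = 1" for z
  proof -
    have "poly ?p z = slice_coord m w (d j) (\<lambda>C. \<Sum>j\<le>n. slice_smult m w (z ^ j) (d j) C)"
      unfolding slice_coord_sum slice_coord_slice_smult[OF assms(1,2,2)] slice_coeff_poly_def
      by (simp add: poly_sum poly_monom mult.commute)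
    also have "\<dots> = 0"
      unfolding assms(3)[OF that] by (simp add: slice_coord_def cinner_def complex_eq_iff)
    finally show ?thesis .
  qed
  \<comment> \<open>A circle contains more than \<open>n + 1\<close> points, e.g. \<open>1\<close> and the Riesz nodes of order \<open>n + 1\<close>.\<close>
  moreover have "degree ?p \<le> Suc n"
    using degree_slice_coeff_poly le_Suc_eq by blast
  ultimately have "?p = 0"
    by (intro poly_eq_0_on_riesz_nodes[of _ "Suc n" 1]) simp_all
  then have "slice_coord m w (d j) (d j) = 0"
    using coeff_slice_coeff_poly[OF assms(4), of m w "d j" d] by simp
  then have "cinner m (d j) (d j) = 0"
    by (simp add: slice_coord_def complex_eq_iff)
  then show ?thesis
    using cinner_eq_zero_iff[OF assms(2)] by blast
qed

lemma slice_poly_eq_monomial_on_slice_imp: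
  assumes "unit_cvector m w" "\<And>j. clifford m (a j)" "clifford m b"
    and "\<And>z. norm z = 1 \<Longrightarrow> slice_poly m a n (slice_point w z) = slice_smult m w (z ^ n) b"
  shows "\<forall>j<n. a j = (\<lambda>_. 0)" "a n = b"
proof -
  define d where "d j = (if j = n then (\<lambda>C. a j C - b C) else a j)" for j
  have d: "clifford m (d j)" for j
    by (simp add: d_def clifford_diff assms(2,3))
  have sum_zero: "(\<lambda>C. \<Sum>j\<le>n. slice_smult m w (z ^ j) (d j) C) = (\<lambda>_. 0)" if "norm z = 1" for z
  proof
    fix C
    have "(\<Sum>j\<le>n. slice_smult m w (z ^ j) (d j) C)
        = (\<Sum>j\<le>n. slice_smult m w (z ^ j) (a j) C - (if j = n then slice_smult m w (z ^ n) b C else 0))"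
      by (intro sum.cong refl) (simp add: d_def slice_smult_diff)
    also have "\<dots> = (\<Sum>j\<le>n. slice_smult m w (z ^ j) (a j) C) - slice_smult m w (z ^ n) b C"
      by (simp add: sum_subtractf)
    also have "\<dots> = 0"
      using fun_cong[OF assms(4)[OF that], of C] by (simp add: slice_poly_slice_point[OF assms(1,2)])
    finally show "(\<Sum>j\<le>n. slice_smult m w (z ^ j) (d j) C) = 0" .
  qed
  have d0: "d j = (\<lambda>_. 0)" if "j \<le> n" for j
    by (rule slice_sum_eq_0_imp_coeffs_eq_0[OF assms(1) d sum_zero that])
  show "\<forall>j<n. a j = (\<lambda>_. 0)"
  proof (intro allI impI)
    fix j
    assume "j < n"
    then show "a j = (\<lambda>_. 0)"
      using d0[of j] by (simp add: d_def)
  qed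
  show "a n = b"
    using d0[of n] by (simp add: d_def fun_eq_iff)
qed

lemma slice_poly_eq_monomial:
  assumes "\<And>j. j < n \<Longrightarrow> a j = (\<lambda>_. 0)"
  shows "slice_poly m a n x = cmul m (cpow m x n) (a n)"
proof
  fix C
  have "slice_poly m a n x C = (if n \<in> {..n} then cmul m (cpow m x n) (a n) C else 0)"
    unfolding slice_poly_def
    by (rule sum_eq_single) (auto simp: assms cmul_zero_right)
  then show "slice_poly m a n x C = cmul m (cpow m x n) (a n) C"
    by simp
qed

lemma slice_poly_deriv_eq_monomial_on_slice:
  assumes "unit_cvector m w" "\<And>j. clifford m (a j)" "\<And>j. j < n \<Longrightarrow> a j = (\<lambda>_. 0)"
  shows "slice_poly_deriv m a n (slice_point w z) = slice_smult m w (z ^ (n - 1)) (cscale (real n) (a n))"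
proof
  fix C
  have "slice_poly_deriv m a n (slice_point w z) C
      = (if n \<in> {1..n} then slice_smult m w (z ^ (n - 1)) (cscale (real n) (a n)) C else 0)"
    unfolding slice_poly_deriv_slice_point[OF assms(1,2)]
    by (rule sum_eq_single) (auto simp: assms(3) cscale_def slice_smult_zero_right)
  then show "slice_poly_deriv m a n (slice_point w z) C = slice_smult m w (z ^ (n - 1)) (cscale (real n) (a n)) C"
    by (cases "n = 0") (simp_all add: cscale_def slice_smult_zero_right)
qed

lemma unit_cvector_e1:
  assumes "m \<ge> 1"
  shows "unit_cvector m (\<lambda>A. if A = {1} then 1 else 0)"
proof -
  have "cinner m (\<lambda>A. if A = {1} then 1 else 0) (\<lambda>A. if A = {1} then 1 else 0)
      = (if {1} \<in> Pow {1..m} then 1 else 0)"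
    unfolding cinner_def by (subst sum_eq_single[where a = "{1}"]) auto
  then show ?thesis
    using assms by (auto simp: unit_cvector_def cvector_def clifford_def)
qed

lemma paravector_eq_scalar_plus_cvector:
  assumes "paravector m x"
  defines "v \<equiv> \<lambda>A. if card A = 1 then x A else 0"
  shows "cvector m v" "x = (\<lambda>A. x {} * cone A + v A)"
proof -
  have x: "clifford m x"
    using assms(1) by (simp add: paravector_def)
  then show "cvector m v"
    unfolding cvector_def clifford_def v_def by auto
  \<comment> \<open>\<open>A \<noteq> {}\<close> with \<open>card A = 0\<close> means \<open>A\<close> is infinite, hence not a subset of \<open>{1..m}\<close>.\<close>
  show "x = (\<lambda>A. x {} * cone A + v A)"
  proof
    fix A :: "nat set"
    consider "A = {}" | "card A = 1" | "1 < card A" | "A \<noteq> {}" "card A = 0"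
      by linarith
    then show "x A = x {} * cone A + v A"
    proof cases
      case 4
      then have "\<not> A \<subseteq> {1..m}"
        using finite_subset by fastforce
      then show ?thesis
        using x 4 by (simp add: clifford_def cone_def v_def)
    qed (use assms(1) in \<open>auto simp: paravector_def cone_def v_def\<close>)
  qed
qed

lemma paravector_eq_slice_point:
  assumes "m \<ge> 1" "paravector m x"
  obtains w z where "unit_cvector m w" "x = slice_point w z" "norm z = cnorm m x"
proof -
  define v where "v = (\<lambda>A. if card A = 1 then x A else 0)"
  have v: "cvector m v" and x_eq: "x = (\<lambda>A. x {} * cone A + v A)"
    using paravector_eq_scalar_plus_cvector[OF assms(2)] unfolding v_def by blast+
  obtain w z where "unit_cvector m w" "x = slice_point w z"
  proof (cases "v = (\<lambda>_. 0)")
    case True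
    have "x = slice_point (\<lambda>A. if A = {1} then 1 else 0) (of_real (x {}))"
      by (subst x_eq) (simp add: slice_point_def True)
    then show ?thesis
      using that unit_cvector_e1[OF assms(1)] by blast
  next
    case False
    define r where "r = cnorm m v"
    have "r > 0"
      using False cnorm_eq_0_iff[OF cvector_clifford[OF v]] cnorm_ge_zero[of m v]
      unfolding r_def by linarith
    have rr: "r * r = cinner m v v"
      unfolding r_def cnorm_cinner using cinner_ge_zero[of m v] by simp
    define w where "w = (\<lambda>A. (1 / r) * v A)"
    have "cvector m w"
      using v unfolding w_def cvector_def clifford_def by auto
    moreover have "cinner m w w = 1"
      using \<open>r > 0\<close> unfolding w_def cinner_scale_left cinner_scale_right rr[symmetric] by simp
    moreover have "x = slice_point w (Complex (x {}) r)"
      by (subst x_eq) (use \<open>r > 0\<close> in \<open>simp add: slice_point_def w_def\<close>)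
    ultimately show ?thesis
      using that by (auto simp: unit_cvector_def)
  qed
  then show ?thesis
    using that cnorm_slice_point by metis
qed

section \<open>The sup norm on the unit ball of paravectors\<close>

lemma continuous_on_cmul:
  assumes "\<And>A. continuous_on S (\<lambda>x. f x A)" "\<And>B. continuous_on S (\<lambda>x. g x B)"
  shows "continuous_on S (\<lambda>x. cmul m (f x) (g x) C)"
proof -
  have if_const: "continuous_on S (\<lambda>x. if P then h x else 0)" if "continuous_on S h" for P h
    using that by (cases P) simp_all
  show ?thesis
    unfolding cmul_def
    by (intro continuous_on_sum if_const continuous_on_mult continuous_on_const assms)
qed

lemma continuous_on_cpow: "continuous_on UNIV (\<lambda>x::clif. cpow m x k C)"
proof (induction k arbitrary: C)
  case (Suc k)
  then show ?case
    by (simp only: cpow.simps) (intro continuous_on_cmul Suc.IH continuous_on_product_coordinates)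
qed simp

lemma continuous_on_cnorm:
  assumes "\<And>A. continuous_on S (\<lambda>x. F x A)"
  shows "continuous_on S (\<lambda>x. cnorm m (F x))"
  unfolding cnorm_def
  by (intro continuous_on_sum continuous_on_power continuous_on_real_sqrt assms)

lemma continuous_on_cnorm_slice_poly: "continuous_on UNIV (\<lambda>x. cnorm m (slice_poly m a n x))"
  unfolding slice_poly_def
  by (intro continuous_on_cnorm continuous_on_sum continuous_on_cmul continuous_on_cpow continuous_on_const)

lemma continuous_on_cnorm_slice_poly_deriv: "continuous_on UNIV (\<lambda>x. cnorm m (slice_poly_deriv m a n x))"
  unfolding slice_poly_deriv_def
  by (intro continuous_on_cnorm continuous_on_sum continuous_on_cmul continuous_on_cpow continuous_on_const)

lemma closed_coordinates_vanish: "closed {x :: clif. \<forall>A. Q A \<longrightarrow> x A = 0}"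
proof -
  have "{x :: clif. \<forall>A. Q A \<longrightarrow> x A = 0} = (\<Inter>A\<in>{A. Q A}. {x. x A = 0})"
    by auto
  then show ?thesis
    by (simp add: closed_INT closed_Collect_eq)
qed

lemma abs_coordinate_le_cnorm:
  assumes "A \<subseteq> {1..m}"
  shows "\<bar>x A\<bar> \<le> cnorm m x"
proof -
  have "(x A)\<^sup>2 \<le> (\<Sum>B\<in>Pow {1..m}. (x B)\<^sup>2)"
    by (rule member_le_sum) (use assms in auto)
  then show ?thesis
    unfolding cnorm_def by (rule real_le_rsqrt[of "\<bar>x A\<bar>", simplified])
qed

lemma compact_unit_paravectors: "compact {x. paravector m x \<and> cnorm m x \<le> 1}"
proof -
  define B where "B = PiE UNIV (\<lambda>_::nat set. {-1..1::real})"
  have "compactin (product_topology (\<lambda>_. euclidean) UNIV) B"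
    unfolding B_def compactin_PiE by simp
  then have "compact B"
    unfolding euclidean_product_topology compactin_euclidean_iff .
  moreover have "closed ({x :: clif. \<forall>A. \<not> A \<subseteq> {1..m} \<longrightarrow> x A = 0}
      \<inter> {x. \<forall>A. 1 < card A \<longrightarrow> x A = 0} \<inter> {x. cnorm m x \<le> 1})"
    by (intro closed_Int closed_coordinates_vanish closed_Collect_le continuous_on_cnorm
        continuous_on_product_coordinates continuous_on_const)
  moreover have "{x. paravector m x \<and> cnorm m x \<le> 1} = B \<inter> ({x :: clif. \<forall>A. \<not> A \<subseteq> {1..m} \<longrightarrow> x A = 0}
      \<inter> {x. \<forall>A. 1 < card A \<longrightarrow> x A = 0} \<inter> {x. cnorm m x \<le> 1})"
  proof (intro set_eqI iffI)
    fix x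
    assume x: "x \<in> {x. paravector m x \<and> cnorm m x \<le> 1}"
    have "\<bar>x A\<bar> \<le> 1" for A
      using x abs_coordinate_le_cnorm[of A m x] by (cases "A \<subseteq> {1..m}") (auto simp: paravector_def clifford_def)
    then have "x \<in> B"
      by (simp add: B_def PiE_UNIV_domain Pi_iff abs_le_iff)
    then show "x \<in> B \<inter> ({x. \<forall>A. \<not> A \<subseteq> {1..m} \<longrightarrow> x A = 0}
        \<inter> {x. \<forall>A. 1 < card A \<longrightarrow> x A = 0} \<inter> {x. cnorm m x \<le> 1})"
      using x by (simp add: paravector_def clifford_def)
  qed (simp add: paravector_def clifford_def)
  ultimately show ?thesis
    by (simp only: compact_Int_closed)
qed

lemma paravector_cone: "paravector m cone"
  by (auto simp: paravector_def clifford_def cone_def)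

lemma cnorm_cone: "cnorm m cone = 1"
  by (simp add: cnorm_cinner cinner_cone)

lemma cnorm_le_sup_norm:
  assumes "continuous_on UNIV (\<lambda>x. cnorm m (F x))" "paravector m x" "cnorm m x \<le> 1"
  shows "cnorm m (F x) \<le> sup_norm m F"
proof -
  have "bounded ((\<lambda>x. cnorm m (F x)) ` {x. paravector m x \<and> cnorm m x \<le> 1})"
    by (intro compact_imp_bounded compact_continuous_image compact_unit_paravectors
        continuous_on_subset[OF assms(1)]) simp
  then show ?thesis
    unfolding sup_norm_def using assms(2,3) by (intro cSup_upper bounded_imp_bdd_above) auto
qed

lemma sup_norm_le:
  assumes "\<And>x. paravector m x \<Longrightarrow> cnorm m x \<le> 1 \<Longrightarrow> cnorm m (F x) \<le> c"
  shows "sup_norm m F \<le> c"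
  unfolding sup_norm_def
  using assms paravector_cone[of m] cnorm_cone[of m] by (intro cSup_least) auto

lemma sup_norm_eqI:
  assumes "paravector m x" "cnorm m x \<le> 1" "cnorm m (F x) = c"
    and "\<And>y. paravector m y \<Longrightarrow> cnorm m y \<le> 1 \<Longrightarrow> cnorm m (F y) \<le> c"
  shows "sup_norm m F = c"
  unfolding sup_norm_def using assms by (intro cSup_eq_maximum) auto

lemma sup_norm_attained:
  assumes "continuous_on UNIV (\<lambda>x. cnorm m (F x))"
  obtains x where "paravector m x" "cnorm m x \<le> 1" "sup_norm m F = cnorm m (F x)"
proof -
  have "{x. paravector m x \<and> cnorm m x \<le> 1} \<noteq> {}"
    using paravector_cone[of m] cnorm_cone[of m] by auto
  from continuous_attains_sup[OF compact_unit_paravectors this continuous_on_subset[OF assms]]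
  obtain x where "paravector m x" "cnorm m x \<le> 1"
    and "\<And>y. paravector m y \<Longrightarrow> cnorm m y \<le> 1 \<Longrightarrow> cnorm m (F y) \<le> cnorm m (F x)"
    by auto
  then show ?thesis
    using that sup_norm_eqI[of m x F] by simp
qed

lemma clifford_slice_poly: "clifford m (slice_poly m a n x)"
  unfolding slice_poly_def by (intro clifford_sum clifford_cmul)

lemma clifford_slice_poly_deriv: "clifford m (slice_poly_deriv m a n x)"
  unfolding slice_poly_deriv_def by (intro clifford_sum clifford_cmul)

lemma cnorm_cscale: "r \<ge> 0 \<Longrightarrow> cnorm m (cscale r a) = r * cnorm m a"
  unfolding cnorm_cinner cscale_def cinner_scale_left cinner_scale_right
  by (simp add: real_sqrt_mult mult.assoc[symmetric])

lemma norm_poly_slice_coeff_poly_le: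
  assumes "unit_cvector m w" "\<And>j. clifford m (a j)" "clifford m u" "cinner m u u = 1" "norm z \<le> 1"
  shows "norm (poly (slice_coeff_poly m w u a n) z) \<le> sup_norm m (slice_poly m a n)"
proof -
  have "norm (poly (slice_coeff_poly m w u a n) z) = norm (slice_coord m w u (slice_poly m a n (slice_point w z)))"
    by (simp add: slice_coord_slice_poly[OF assms(1-3)])
  also have "\<dots> \<le> cnorm m (slice_poly m a n (slice_point w z))"
    by (rule norm_slice_coord_le[OF assms(1) clifford_slice_poly assms(3,4)])
  also have "\<dots> \<le> sup_norm m (slice_poly m a n)"
    using assms(1,5)
    by (intro cnorm_le_sup_norm continuous_on_cnorm_slice_poly)
       (simp_all add: paravector_slice_point unit_cvector_cvector cnorm_slice_point)
  finally show ?thesis .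
qed

theorem sup_norm_slice_poly_deriv_le:
  assumes "m \<ge> 1" "\<And>j. clifford m (a j)"
  shows "sup_norm m (slice_poly_deriv m a n) \<le> real n * sup_norm m (slice_poly m a n)"
proof (rule sup_norm_le)
  fix x
  assume "paravector m x" "cnorm m x \<le> 1"
  then obtain w z where w: "unit_cvector m w" and x: "x = slice_point w z" and z: "norm z \<le> 1"
    using paravector_eq_slice_point[OF assms(1)] by metis
  obtain u where u: "clifford m u" "cinner m u u = 1"
    and u_eq: "slice_coord m w u (slice_poly_deriv m a n x) = of_real (cnorm m (slice_poly_deriv m a n x))"
    using exists_slice_coord_eq_cnorm[OF w clifford_slice_poly_deriv] by blast
  have "cnorm m (slice_poly_deriv m a n x) = norm (poly (pderiv (slice_coeff_poly m w u a n)) z)"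
    using u_eq by (simp add: x slice_coord_slice_poly_deriv[OF w assms(2) u(1)] cnorm_ge_zero)
  also have "\<dots> \<le> real n * sup_norm m (slice_poly m a n)"
    using norm_poly_slice_coeff_poly_le[OF w assms(2) u]
    by (intro bernstein_inequality[OF degree_slice_coeff_poly _ z]) simp
  finally show "cnorm m (slice_poly_deriv m a n x) \<le> real n * sup_norm m (slice_poly m a n)" .
qed

lemma slice_coeff_poly_eq_monom_imp_monomial:
  assumes w: "unit_cvector m w" and a: "\<And>j. clifford m (a j)" and u: "clifford m u" "cinner m u u = 1"
    and p: "slice_coeff_poly m w u a n = monom c n" and c: "sup_norm m (slice_poly m a n) \<le> norm c"
  shows "\<forall>j<n. a j = (\<lambda>_. 0)"
proof -
  \<comment> \<open>The coordinate functional is large enough to force equality in \<open>norm_slice_coord_le\<close>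
    all along the unit circle of the slice.\<close>
  have "slice_poly m a n (slice_point w y) = slice_smult m w (y ^ n) (slice_smult m w c u)"
    if "norm y = 1" for y
  proof -
    have coord: "slice_coord m w u (slice_poly m a n (slice_point w y)) = c * y ^ n"
      using slice_coord_slice_poly[OF w a u(1)] by (simp add: p poly_monom)
    have "cnorm m (slice_poly m a n (slice_point w y)) \<le> sup_norm m (slice_poly m a n)"
      using w that
      by (intro cnorm_le_sup_norm continuous_on_cnorm_slice_poly)
         (simp_all add: paravector_slice_point unit_cvector_cvector cnorm_slice_point)
    also have "\<dots> \<le> norm (slice_coord m w u (slice_poly m a n (slice_point w y)))"
      using c that by (simp add: coord norm_mult norm_power)
    finally have "slice_poly m a n (slice_point w y)
        = slice_smult m w (slice_coord m w u (slice_poly m a n (slice_point w y))) u"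
      by (rule slice_coord_eq_cnorm_imp[OF w clifford_slice_poly u])
    then show ?thesis
      by (simp add: coord slice_smult_mult[OF w u(1)] mult.commute)
  qed
  then show ?thesis
    by (rule slice_poly_eq_monomial_on_slice_imp(1)[OF w a clifford_slice_smult[OF u(1)]])
qed

lemma sup_norm_slice_poly_deriv_eq_imp_monomial:
  assumes "m \<ge> 1" "\<And>j. clifford m (a j)"
    and "sup_norm m (slice_poly_deriv m a n) = real n * sup_norm m (slice_poly m a n)"
  shows "\<forall>j<n. a j = (\<lambda>_. 0)"
proof (cases "n = 0")
  case False
  let ?M = "sup_norm m (slice_poly m a n)"
  obtain x where "paravector m x" "cnorm m x \<le> 1"
    and x_max: "sup_norm m (slice_poly_deriv m a n) = cnorm m (slice_poly_deriv m a n x)"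
    using sup_norm_attained[OF continuous_on_cnorm_slice_poly_deriv] by blast
  then obtain w z where w: "unit_cvector m w" and x: "x = slice_point w z" and z: "norm z \<le> 1"
    using paravector_eq_slice_point[OF assms(1)] by metis
  obtain u where u: "clifford m u" "cinner m u u = 1"
    and u_eq: "slice_coord m w u (slice_poly_deriv m a n x) = of_real (cnorm m (slice_poly_deriv m a n x))"
    using exists_slice_coord_eq_cnorm[OF w clifford_slice_poly_deriv] by blast
  define p where "p = slice_coeff_poly m w u a n"
  define c where "c = coeff p n"
  have "norm (poly (pderiv p) z) = cnorm m (slice_poly_deriv m a n x)"
    using u_eq by (simp add: p_def x slice_coord_slice_poly_deriv[OF w assms(2) u(1)] cnorm_ge_zero)
  also have "\<dots> = real n * ?M"
    using x_max assms(3) by simp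
  finally have extremal: "norm (poly (pderiv p) z) = real n * ?M" .
  have p: "p = monom c n"
    unfolding c_def
  proof (rule bernstein_equality[OF _ _ z, where M = ?M])
    show "degree p \<le> n"
      unfolding p_def by (rule degree_slice_coeff_poly)
    show "norm (poly p y) \<le> ?M" if "norm y = 1" for y
      unfolding p_def using that by (intro norm_poly_slice_coeff_poly_le[OF w assms(2) u]) simp
  qed (use extremal in simp)
  have "real n * ?M = real n * (norm c * norm z ^ (n - 1))"
    using extremal by (auto simp: p pderiv_monom poly_monom norm_mult norm_power)
  also have "\<dots> \<le> real n * norm c"
    using z by (intro mult_left_mono mult_left_le) (simp_all add: power_le_one)
  finally have "?M \<le> norm c"
    using False by simp
  then show ?thesis
    using slice_coeff_poly_eq_monom_imp_monomial[OF w assms(2) u] p by (simp add: p_def)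
qed simp

lemma sup_norm_monomial:
  assumes "m \<ge> 1" "\<And>j. clifford m (a j)" "\<And>j. j < n \<Longrightarrow> a j = (\<lambda>_. 0)"
  shows "sup_norm m (slice_poly_deriv m a n) = real n * sup_norm m (slice_poly m a n)"
proof -
  have shrink: "cnorm m y ^ k * t \<le> t" if "cnorm m y \<le> 1" "t \<ge> 0" for y k t
    using that by (simp add: mult_left_le_one_le power_le_one cnorm_ge_zero)
  have P: "cnorm m (slice_poly m a n x) = cnorm m x ^ n * cnorm m (a n)"
    and D: "cnorm m (slice_poly_deriv m a n x) = cnorm m x ^ (n - 1) * (real n * cnorm m (a n))"
    if x: "paravector m x" for x
  proof -
    obtain w z where w: "unit_cvector m w" and x: "x = slice_point w z"
      using paravector_eq_slice_point[OF assms(1) x] by metis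
    show "cnorm m (slice_poly m a n x) = cnorm m x ^ n * cnorm m (a n)"
      using assms(2)
      by (simp add: x cnorm_slice_point[OF w] slice_poly_eq_monomial[OF assms(3)] cpow_slice_point[OF w]
          cmul_slice_point[OF unit_cvector_cvector[OF w]] cnorm_slice_smult[OF w] norm_power)
    show "cnorm m (slice_poly_deriv m a n x) = cnorm m x ^ (n - 1) * (real n * cnorm m (a n))"
      using assms(2)
      by (simp add: x cnorm_slice_point[OF w] slice_poly_deriv_eq_monomial_on_slice[OF w assms(2,3)]
          cnorm_slice_smult[OF w] clifford_cscale cnorm_cscale norm_power)
  qed
  have "sup_norm m (slice_poly m a n) = cnorm m (a n)"
    using P paravector_cone[of m] cnorm_cone[of m] cnorm_ge_zero[of m "a n"]
    by (intro sup_norm_eqI[of m cone]) (auto intro: shrink)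
  moreover have "sup_norm m (slice_poly_deriv m a n) = real n * cnorm m (a n)"
    using D paravector_cone[of m] cnorm_cone[of m] cnorm_ge_zero[of m "a n"]
    by (intro sup_norm_eqI[of m cone]) (auto intro: shrink)
  ultimately show ?thesis
    by simp
qed

theorem theorem1p2:
  fixes m n :: nat and a :: "nat \<Rightarrow> clif"
  assumes "m \<ge> 1"
    and "\<And>j. clifford m (a j)"
    and "a n \<noteq> (\<lambda>_. 0)"
  shows "sup_norm m (slice_poly_deriv m a n) \<le> real n * sup_norm m (slice_poly m a n)
       \<and> (sup_norm m (slice_poly_deriv m a n) = real n * sup_norm m (slice_poly m a n)
         \<longleftrightarrow> (\<exists>b. clifford m b \<and>
                (\<forall>x. paravector m x \<longrightarrow> slice_poly m a n x = cmul m (cpow m x n) b)))"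
proof -
  have extremal_iff: "sup_norm m (slice_poly_deriv m a n) = real n * sup_norm m (slice_poly m a n)
      \<longleftrightarrow> (\<forall>j<n. a j = (\<lambda>_. 0))"
  proof
    assume "sup_norm m (slice_poly_deriv m a n) = real n * sup_norm m (slice_poly m a n)"
    then show "\<forall>j<n. a j = (\<lambda>_. 0)"
      by (rule sup_norm_slice_poly_deriv_eq_imp_monomial[OF assms(1,2)])
  next
    assume "\<forall>j<n. a j = (\<lambda>_. 0)"
    then show "sup_norm m (slice_poly_deriv m a n) = real n * sup_norm m (slice_poly m a n)"
      by (intro sup_norm_monomial[OF assms(1,2)]) simp
  qed
  have monomial_iff: "(\<forall>j<n. a j = (\<lambda>_. 0))
      \<longleftrightarrow> (\<exists>b. clifford m b \<and> (\<forall>x. paravector m x \<longrightarrow> slice_poly m a n x = cmul m (cpow m x n) b))"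
  proof
    assume "\<forall>j<n. a j = (\<lambda>_. 0)"
    then have "slice_poly m a n x = cmul m (cpow m x n) (a n)" for x
      by (intro slice_poly_eq_monomial) simp
    then show "\<exists>b. clifford m b \<and> (\<forall>x. paravector m x \<longrightarrow> slice_poly m a n x = cmul m (cpow m x n) b)"
      using assms(2) by blast
  next
    assume "\<exists>b. clifford m b \<and> (\<forall>x. paravector m x \<longrightarrow> slice_poly m a n x = cmul m (cpow m x n) b)"
    then obtain b where b: "clifford m b"
      and P: "\<And>x. paravector m x \<Longrightarrow> slice_poly m a n x = cmul m (cpow m x n) b"
      by blast
    obtain w where w: "unit_cvector m w"
      using unit_cvector_e1[OF assms(1)] by blast
    have "slice_poly m a n (slice_point w z) = slice_smult m w (z ^ n) b" for z
      using P[OF paravector_slice_point[OF unit_cvector_cvector[OF w]]]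
      by (simp add: cpow_slice_point[OF w] cmul_slice_point[OF unit_cvector_cvector[OF w] b])
    then show "\<forall>j<n. a j = (\<lambda>_. 0)"
      by (rule slice_poly_eq_monomial_on_slice_imp(1)[OF w assms(2) b])
  qed
  show ?thesis
    unfolding extremal_iff monomial_iff using sup_norm_slice_poly_deriv_le[OF assms(1,2)] by simp
qed

end
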